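(* Let $a<b$ be real numbers, let $M\colon[a,b]\to\mathbb{R}$ be non-decreasing, and let $N\colon[M(a),M(b)]\to\mathbb{R}$ be non-decreasing. Let \[H=\{y\in[M(a),M(b)] : M^{-1}[\{y\}]\text{ contains more than one point}\},\] and define $X,\Xi\colon[M(a),M(b)]\to[a,b]$ by $X(y)=\inf\{x\in[a,b]: y\le M(x)\}$ and $\Xi(y)=\sup\{x\in[a,b]: M(x)\le y\}$. For $y\in H$ let $\Delta N(y,-)=N(y)-N(y-)$ and $\Delta N(y,+)=N(y+)-N(y)$ (with the conventions $N(M(a)-)=N(M(a))$ and $N(M(b)+)=N(M(b))$), and let \[N_1=N-\sum_{y\in H}\Big(\Delta N(y,-)\,\mathbf 1_{[y,M(b)]}+\Delta N(y,+)\,\mathbf 1_{(y,M(b)]}\Big).\] Then for each bounded Borel function $g$ on the range of $M$, \[\int_a^b g(M(x))\,dN(M(x))=\int_{M(a)}^{M(b)} g(M(X(y)))\,dN_1(y)+\sum_{y\in H} g(M(X(y)))\,\Delta N(y,-)+\sum_{y\in H} g(M(\Xi(y)))\,\Delta N(y,+).\] Furthermore, the same identity holds with $X$ replaced by $\Xi$ in the first term on the right-hand side.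
   Context: "Non-decreasing" is what the paper calls increasing. For a non-decreasing function $F\colon[c,d]\to\mathbb{R}$, the measure corresponding to $F$ is the unique Borel measure $\mu$ on $[c,d]$ such that for every continuous $f\colon[c,d]\to\mathbb{R}$, $\int_{[c,d]} f\,d\mu$ equals the Riemann–Stieltjes integral $\int_c^d f(x)\,dF(x)$. For a bounded Borel function $f$, the Lebesgue–Stieltjes integral $\int_c^d f(x)\,dF(x)$ is defined as $\int_{[c,d]} f\,d\mu$. The notation $\int_a^b h(x)\,dN(M(x))$ means $\int_a^b h(x)\,d\Lambda(x)$ with $\Lambda=N\circ M$. *)

theory Defs
  imports "HOL-Analysis.Analysis"
begin

definition RS_has_integral ::
  "(real \<Rightarrow> real) \<Rightarrow> (real \<Rightarrow> real) \<Rightarrow> real \<Rightarrow> real \<Rightarrow> real \<Rightarrow> bool" where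
  "RS_has_integral f F c d I \<longleftrightarrow>
     (\<forall>\<epsilon>>0. \<exists>\<delta>>0. \<forall>(n::nat) (x::nat \<Rightarrow> real) (t::nat \<Rightarrow> real).
        (x 0 = c \<and> x n = d \<and>
         (\<forall>i<n. x i < x (Suc i) \<and> x (Suc i) - x i < \<delta> \<and> x i \<le> t i \<and> t i \<le> x (Suc i)))
        \<longrightarrow> \<bar>(\<Sum>i<n. f (t i) * (F (x (Suc i)) - F (x i))) - I\<bar> < \<epsilon>)"

definition LS_measure :: "real \<Rightarrow> real \<Rightarrow> (real \<Rightarrow> real) \<Rightarrow> real measure" where
  "LS_measure c d F = (THE \<mu>. sets \<mu> = sets (restrict_space borel {c..d}) \<and> finite_measure \<mu> \<and>
      (\<forall>f. continuous_on {c..d} f \<longrightarrow> RS_has_integral f F c d (\<integral>x. f x \<partial>\<mu>)))"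

definition LS_integral :: "real \<Rightarrow> real \<Rightarrow> (real \<Rightarrow> real) \<Rightarrow> (real \<Rightarrow> real) \<Rightarrow> real" where
  "LS_integral c d F f = (\<integral>x. f x \<partial>(LS_measure c d F))"

definition left_lim :: "real \<Rightarrow> (real \<Rightarrow> real) \<Rightarrow> real \<Rightarrow> real" where
  "left_lim c N y = (if y = c then N y else Lim (at_left y) N)"

definition right_lim :: "real \<Rightarrow> (real \<Rightarrow> real) \<Rightarrow> real \<Rightarrow> real" where
  "right_lim d N y = (if y = d then N y else Lim (at_right y) N)"

end

theory Submission
  imports Defs "HOL-Analysis.Analysis"
begin

text \<open>
  Write \<open>\<mu>\<^sub>1\<close> for the Lebesgue--Stieltjes measure of \<open>N\<^sub>1\<close> on \<open>[M a, M b]\<close>, in which the jumps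
  of \<open>N\<close> at the flat levels \<open>H\<close> of \<open>M\<close> are removed. The measure of \<open>N \<circ> M\<close> on \<open>[a, b]\<close> is then
  the image of \<open>\<mu>\<^sub>1\<close> under the generalised inverse \<open>X\<close>, plus a point mass
  \<open>\<Delta>N(y,-)\<close> at \<open>X y\<close> and a point mass \<open>\<Delta>N(y,+)\<close> at \<open>\<Xi> y\<close> for every \<open>y \<in> H\<close>: a jump of \<open>N\<close>
  just below (above) a flat level is felt by \<open>N \<circ> M\<close> at the left (right) end of the flat
  stretch. Both sides are finite measures on \<open>[a, b]\<close>, so it suffices to compare their
  distribution functions \<open>s \<mapsto> measure {a..s}\<close>, which are computed from the right limit
  \<open>M(s+)\<close> and the Galois-type characterisations of \<open>X y \<le> s\<close> and \<open>\<Xi> y \<le> s\<close>. Finally \<open>X\<close> and \<open>\<Xi>\<close>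
  differ only on the countable set \<open>H\<close>, and \<open>\<mu>\<^sub>1\<close> has no atoms there, so \<open>X\<close> may be replaced
  by \<open>\<Xi>\<close> in the first term.
\<close>

section \<open>One-sided limits of monotone functions\<close>

lemma right_lim_tendsto:
  fixes F :: "real \<Rightarrow> real"
  assumes mono: "mono_on {c..d} F" and y: "c \<le> y" "y < d"
  shows "(F \<longlongrightarrow> right_lim d F y) (at_right y)"
    and "right_lim d F y = Inf (F ` {y<..d})"
proof -
  let ?L = "Inf (F ` {y<..d})"
  have bdd: "bdd_below (F ` {y<..d})"
    using mono y by (auto simp: bdd_below_def mono_on_def intro!: exI[of _ "F y"])
  have ne: "F ` {y<..d} \<noteq> {}" using y by auto
  have T: "(F \<longlongrightarrow> ?L) (at_right y)"
  proof (rule order_tendstoI)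
    fix a assume "a < ?L"
    then have "\<forall>t\<in>{y<..d}. a < F t"
      using bdd by (meson cInf_lower image_eqI less_le_trans)
    then show "eventually (\<lambda>t. a < F t) (at_right y)"
      using eventually_at_right_real[OF y(2)] by (auto elim: eventually_mono)
  next
    fix a assume "?L < a"
    then obtain t0 where t0: "t0 \<in> {y<..d}" "F t0 < a"
      using cInf_lessD[OF ne] by blast
    have "eventually (\<lambda>t. t \<in> {y<..<t0}) (at_right y)"
      using t0 by (intro eventually_at_right_real) auto
    then show "eventually (\<lambda>t. F t < a) (at_right y)"
    proof (rule eventually_mono)
      fix t assume "t \<in> {y<..<t0}"
      then have "F t \<le> F t0" using mono t0 y by (auto simp: mono_on_def)
      then show "F t < a" using t0 by simp
    qed
  qed
  have "right_lim d F y = ?L"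
    unfolding right_lim_def using y T by (auto intro!: tendsto_Lim)
  then show "(F \<longlongrightarrow> right_lim d F y) (at_right y)" "right_lim d F y = Inf (F ` {y<..d})"
    using T by auto
qed

lemma left_lim_tendsto:
  fixes F :: "real \<Rightarrow> real"
  assumes mono: "mono_on {c..d} F" and y: "c < y" "y \<le> d"
  shows "(F \<longlongrightarrow> left_lim c F y) (at_left y)"
    and "left_lim c F y = Sup (F ` {c..<y})"
proof -
  let ?L = "Sup (F ` {c..<y})"
  have bdd: "bdd_above (F ` {c..<y})"
    using mono y by (auto simp: bdd_above_def mono_on_def intro!: exI[of _ "F y"])
  have ne: "F ` {c..<y} \<noteq> {}" using y by auto
  have T: "(F \<longlongrightarrow> ?L) (at_left y)"
  proof (rule order_tendstoI)
    fix a assume "?L < a"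
    then have "\<forall>t\<in>{c..<y}. F t < a"
      using bdd by (meson cSup_upper image_eqI le_less_trans)
    then show "eventually (\<lambda>t. F t < a) (at_left y)"
      using eventually_at_left_real[OF y(1)] by (auto elim: eventually_mono)
  next
    fix a assume "a < ?L"
    then obtain t0 where t0: "t0 \<in> {c..<y}" "a < F t0"
      using less_cSupD[OF ne] by blast
    have "eventually (\<lambda>t. t \<in> {t0<..<y}) (at_left y)"
      using t0 by (intro eventually_at_left_real) auto
    then show "eventually (\<lambda>t. a < F t) (at_left y)"
    proof (rule eventually_mono)
      fix t assume "t \<in> {t0<..<y}"
      then have "F t0 \<le> F t" using mono t0 y by (auto simp: mono_on_def)
      then show "a < F t" using t0 by simp
    qed
  qed
  have "left_lim c F y = ?L"
    unfolding left_lim_def using y T by (auto intro!: tendsto_Lim)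
  then show "(F \<longlongrightarrow> left_lim c F y) (at_left y)" "left_lim c F y = Sup (F ` {c..<y})"
    using T by auto
qed

lemma right_lim_bounds:
  fixes F :: "real \<Rightarrow> real"
  assumes mono: "mono_on {c..d} F" and y: "c \<le> y" "y \<le> d"
  shows "F y \<le> right_lim d F y" "\<And>t. y < t \<Longrightarrow> t \<le> d \<Longrightarrow> right_lim d F y \<le> F t"
    "right_lim d F y \<le> F d"
proof -
  have bdd: "y < d \<Longrightarrow> bdd_below (F ` {y<..d})"
    using mono y by (auto simp: bdd_below_def mono_on_def intro!: exI[of _ "F y"])
  show "F y \<le> right_lim d F y"
  proof (cases "y = d")
    case True then show ?thesis by (simp add: right_lim_def)
  next
    case False
    then show ?thesis using right_lim_tendsto(2)[OF mono y(1)] y mono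
      by (auto intro!: cInf_greatest simp: mono_on_def)
  qed
  show "\<And>t. y < t \<Longrightarrow> t \<le> d \<Longrightarrow> right_lim d F y \<le> F t"
    using right_lim_tendsto(2)[OF mono y(1)] bdd by (auto intro!: cInf_lower)
  show "right_lim d F y \<le> F d"
  proof (cases "y = d")
    case True then show ?thesis by (simp add: right_lim_def)
  next
    case False
    then show ?thesis using right_lim_tendsto(2)[OF mono y(1)] bdd y by (auto intro!: cInf_lower)
  qed
qed

lemma left_lim_bounds:
  fixes F :: "real \<Rightarrow> real"
  assumes mono: "mono_on {c..d} F" and y: "c \<le> y" "y \<le> d"
  shows "left_lim c F y \<le> F y" "\<And>t. c \<le> t \<Longrightarrow> t < y \<Longrightarrow> F t \<le> left_lim c F y"
    "F c \<le> left_lim c F y"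
proof -
  have bdd: "c < y \<Longrightarrow> bdd_above (F ` {c..<y})"
    using mono y by (auto simp: bdd_above_def mono_on_def intro!: exI[of _ "F y"])
  show "left_lim c F y \<le> F y"
  proof (cases "y = c")
    case True then show ?thesis by (simp add: left_lim_def)
  next
    case False
    then show ?thesis using left_lim_tendsto(2)[OF mono _ y(2)] y mono
      by (auto intro!: cSup_least simp: mono_on_def)
  qed
  show "\<And>t. c \<le> t \<Longrightarrow> t < y \<Longrightarrow> F t \<le> left_lim c F y"
    using left_lim_tendsto(2)[OF mono _ y(2)] bdd by (auto intro!: cSup_upper)
  show "F c \<le> left_lim c F y"
  proof (cases "y = c")
    case True then show ?thesis by (simp add: left_lim_def)
  next
    case False
    then show ?thesis using left_lim_tendsto(2)[OF mono _ y(2)] bdd y by (auto intro!: cSup_upper)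
  qed
qed

lemma right_lim_mono:
  fixes F :: "real \<Rightarrow> real"
  assumes mono: "mono_on {c..d} F" and "c \<le> s" "s \<le> t" "t \<le> d"
  shows "right_lim d F s \<le> right_lim d F t"
proof (cases "s = t")
  case False
  then have "right_lim d F s \<le> F t" using right_lim_bounds(2)[OF mono, of s t] assms by auto
  also have "\<dots> \<le> right_lim d F t" using right_lim_bounds(1)[OF mono, of t] assms by auto
  finally show ?thesis .
qed simp

section \<open>Lebesgue--Stieltjes measures\<close>

definition right_cont_extension :: "real \<Rightarrow> real \<Rightarrow> (real \<Rightarrow> real) \<Rightarrow> real \<Rightarrow> real" where
  "right_cont_extension c d F t = (if t < c then F c else right_lim d F (min t d))"

lemma mono_right_cont_extension:
  fixes F :: "real \<Rightarrow> real"
  assumes mono: "mono_on {c..d} F" and cd: "c \<le> d" and xy: "x \<le> y"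
  shows "right_cont_extension c d F x \<le> right_cont_extension c d F y"
proof -
  have "F c \<le> right_lim d F (min y d)" if "c \<le> y"
  proof -
    have "F c \<le> F (min y d)" using mono that cd by (auto simp: mono_on_def)
    also have "\<dots> \<le> right_lim d F (min y d)" using right_lim_bounds(1)[OF mono] that cd by auto
    finally show ?thesis .
  qed
  then show ?thesis unfolding right_cont_extension_def using xy cd
    by (auto intro!: right_lim_mono[OF mono])
qed

lemma right_cont_extension_continuous:
  fixes F :: "real \<Rightarrow> real"
  assumes mono: "mono_on {c..d} F" and cd: "c \<le> d"
  shows "continuous (at_right a) (right_cont_extension c d F)"
  unfolding continuous_within
proof (cases "a < c")
  case True
  have "eventually (\<lambda>t. t \<in> {a<..<c}) (at_right a)" using True by (rule eventually_at_right_real)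
  then have "eventually (\<lambda>t. right_cont_extension c d F t = right_cont_extension c d F a) (at_right a)"
    by (rule eventually_mono) (use True in \<open>auto simp: right_cont_extension_def\<close>)
  then show "(right_cont_extension c d F \<longlongrightarrow> right_cont_extension c d F a) (at_right a)"
    by (rule tendsto_eventually)
next
  case False
  show "(right_cont_extension c d F \<longlongrightarrow> right_cont_extension c d F a) (at_right a)"
  proof (cases "d \<le> a")
    case True
    have "eventually (\<lambda>t. t \<in> {a<..<a+1}) (at_right a)" by (rule eventually_at_right_real) simp
    then have "eventually (\<lambda>t. right_cont_extension c d F t = right_cont_extension c d F a) (at_right a)"
      by (rule eventually_mono) (use True False cd in \<open>auto simp: right_cont_extension_def min_def\<close>)
    then show ?thesis by (rule tendsto_eventually)
  next
    case False2: False
    let ?R = "right_lim d F"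
    have ca: "c \<le> a" "a < d" using False False2 by auto
    have Ga: "right_cont_extension c d F a = ?R a" using ca by (simp add: right_cont_extension_def)
    show ?thesis unfolding Ga
    proof (rule order_tendstoI)
      fix b assume "b < ?R a"
      have "eventually (\<lambda>t. t \<in> {a<..<d}) (at_right a)" using ca by (intro eventually_at_right_real)
      then show "eventually (\<lambda>t. b < right_cont_extension c d F t) (at_right a)"
      proof (rule eventually_mono)
        fix t assume t: "t \<in> {a<..<d}"
        then have "?R a \<le> ?R t" using right_lim_mono[OF mono] ca by auto
        then show "b < right_cont_extension c d F t" using t ca \<open>b < ?R a\<close> by (auto simp: right_cont_extension_def)
      qed
    next
      fix b assume b: "?R a < b"
      have ne: "F ` {a<..d} \<noteq> {}" using ca by auto
      have "Inf (F ` {a<..d}) < b" using b right_lim_tendsto(2)[OF mono ca] by simp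
      from cInf_lessD[OF ne this] obtain w where w: "w \<in> {a<..d}" "F w < b" by blast
      have "eventually (\<lambda>t. t \<in> {a<..<w}) (at_right a)" using w by (intro eventually_at_right_real) auto
      then show "eventually (\<lambda>t. right_cont_extension c d F t < b) (at_right a)"
      proof (rule eventually_mono)
        fix t assume t: "t \<in> {a<..<w}"
        then have "?R t \<le> F w" using right_lim_bounds(2)[OF mono, of t w] ca w by auto
        then show "right_cont_extension c d F t < b" using t ca w by (auto simp: right_cont_extension_def min_def)
      qed
    qed
  qed
qed

lemma emeasure_interval_measure_Ioo_eq_0:
  fixes G :: "real \<Rightarrow> real"
  assumes G_mono: "\<And>x y. x \<le> y \<Longrightarrow> G x \<le> G y" and G_cont: "\<And>x. continuous (at_right x) G"
    and const: "\<And>x. x \<in> {u..<v} \<Longrightarrow> G x = G u"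
  shows "emeasure (interval_measure G) {u<..<v} = 0"
proof -
  let ?M = "interval_measure G"
  let ?I = "\<lambda>n::nat. {u<..v - 1 / Suc n}"
  have "emeasure ?M (?I n) = 0" for n
  proof (cases "u \<le> v - 1 / Suc n")
    case True
    then have "v - 1 / Suc n \<in> {u..<v}" by simp
    then show ?thesis using emeasure_interval_measure_Ioc[OF True G_mono G_cont] const by simp
  next
    case False
    then have "?I n = {}" by auto
    then show ?thesis by simp
  qed
  then have "emeasure ?M (\<Union>n. ?I n) = 0" by (intro emeasure_UN_eq_0) auto
  moreover have "{u<..<v} \<subseteq> (\<Union>n. ?I n)"
  proof
    fix x assume x: "x \<in> {u<..<v}"
    obtain n :: nat where n: "1 / (v - x) < n" using reals_Archimedean2 by blast
    have "1 / Suc n < v - x"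
    proof -
      have "1 / (v - x) < Suc n" using n by simp
      then show ?thesis using x by (simp add: field_simps)
    qed
    then show "x \<in> (\<Union>n. ?I n)" using x by (intro UN_I[of n]) auto
  qed
  moreover have "(\<Union>n. ?I n) \<in> sets ?M" by auto
  ultimately show ?thesis by (metis emeasure_mono le_zero_eq)
qed

lemma exists_measure_with_cdf:
  fixes F :: "real \<Rightarrow> real"
  assumes mono: "mono_on {c..d} F" and cd: "c \<le> d"
  shows "\<exists>\<mu>. sets \<mu> = sets (restrict_space borel {c..d}) \<and> finite_measure \<mu> \<and>
           (\<forall>s\<in>{c..d}. measure \<mu> {c..s} = right_lim d F s - F c)"
proof -
  let ?G = "right_cont_extension c d F"
  let ?M = "interval_measure ?G"
  have G_mono: "\<And>x y. x \<le> y \<Longrightarrow> ?G x \<le> ?G y" using mono_right_cont_extension[OF mono cd] by blast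
  have G_cont: "\<And>x. continuous (at_right x) ?G" using right_cont_extension_continuous[OF mono cd] by blast
  define \<mu> where "\<mu> = restrict_space ?M {c..d}"
  have sets: "sets \<mu> = sets (restrict_space borel {c..d})"
    unfolding \<mu>_def by (simp add: sets_restrict_space)
  have below_c: "emeasure ?M {c-1<..<c} = 0"
    by (rule emeasure_interval_measure_Ioo_eq_0[OF G_mono G_cont]) (auto simp: right_cont_extension_def)
  have cdf: "emeasure \<mu> {c..s} = ennreal (right_lim d F s - F c)" if s: "s \<in> {c..d}" for s
  proof -
    have "emeasure \<mu> {c..s} = emeasure ?M {c..s}"
      unfolding \<mu>_def using s by (intro emeasure_restrict_space) auto
    also have "\<dots> = emeasure ?M {c-1<..<c} + emeasure ?M {c..s}" using below_c by simp
    also have "\<dots> = emeasure ?M ({c-1<..<c} \<union> {c..s})" by (intro plus_emeasure) auto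
    also have "{c-1<..<c} \<union> {c..s} = {c-1<..s}" using s by auto
    also have "emeasure ?M {c-1<..s} = ?G s - ?G (c - 1)"
      using s by (intro emeasure_interval_measure_Ioc[OF _ G_mono G_cont]) auto
    also have "?G s - ?G (c-1) = right_lim d F s - F c" using s by (simp add: right_cont_extension_def)
    finally show ?thesis .
  qed
  have fin: "finite_measure \<mu>"
  proof
    have "space \<mu> = {c..d}" unfolding \<mu>_def by (simp add: space_restrict_space)
    then show "emeasure \<mu> (space \<mu>) \<noteq> \<infinity>" using cdf[of d] cd by simp
  qed
  have "measure \<mu> {c..s} = right_lim d F s - F c" if s: "s \<in> {c..d}" for s
  proof -
    have "F c \<le> F s" using mono s by (auto simp: mono_on_def)
    also have "F s \<le> right_lim d F s" using right_lim_bounds(1)[OF mono] s by auto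
    finally show ?thesis using cdf[OF s] by (simp add: measure_def)
  qed
  then show ?thesis using sets fin by blast
qed

lemma partition_mono:
  fixes x :: "nat \<Rightarrow> real"
  assumes "\<forall>i<n. x i < x (Suc i)" "j \<le> k" "k \<le> n"
  shows "x j \<le> x k"
  using assms(2,3)
proof (induction k)
  case (Suc k)
  show ?case
  proof (cases "j = Suc k")
    case False
    then have "x j \<le> x k" using Suc by simp
    also have "x k \<le> x (Suc k)" using assms(1) Suc.prems by (simp add: less_imp_le)
    finally show ?thesis .
  qed simp
qed simp

lemma sum_indicator_partition:
  fixes x :: "nat \<Rightarrow> real"
  assumes "\<forall>i<n. x i < x (Suc i)"
  shows "(\<Sum>i<n. indicator {x i<..x (Suc i)} u) = (indicator {x 0<..x n} u :: real)"
  using assms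
proof (induction n)
  case (Suc n)
  have "x 0 \<le> x n" "x n < x (Suc n)" using partition_mono[OF Suc.prems, of 0 n] Suc.prems by auto
  then show ?case using Suc by (auto simp: indicator_def)
qed simp

lemma sum_by_parts:
  fixes f D :: "nat \<Rightarrow> real"
  shows "(\<Sum>i<Suc m. f i * (D (Suc i) - D i))
    = f m * D (Suc m) - f 0 * D 0 + (\<Sum>i<m. (f i - f (Suc i)) * D (Suc i))"
  by (induction m) (simp_all add: algebra_simps)

lemma RS_sum_right_lim_approx:
  fixes F :: "real \<Rightarrow> real" and x \<phi> :: "nat \<Rightarrow> real"
  assumes F_mono: "mono_on {c..d} F"
    and x0: "x 0 = c" and xn: "x n = d" and inc: "\<forall>i<n. x i < x (Suc i)" and n: "0 < n"
    and \<phi>: "\<And>i. Suc i < n \<Longrightarrow> \<bar>\<phi> i - \<phi> (Suc i)\<bar> \<le> \<eta>" and \<eta>: "0 \<le> \<eta>"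
  shows "\<bar>(\<Sum>i<n. \<phi> i * (F (x (Suc i)) - F (x i)))
      - ((\<Sum>i<n. \<phi> i * (right_lim d F (x (Suc i)) - right_lim d F (x i))) + \<phi> 0 * (right_lim d F c - F c))\<bar>
    \<le> \<eta> * (F d - F c)"
proof -
  let ?R = "right_lim d F"
  obtain m where nm: "n = Suc m" using n by (cases n) auto
  have xin: "x i \<in> {c..d}" if "i \<le> n" for i
    using partition_mono[OF inc, of 0 i] partition_mono[OF inc, of i n] that x0 xn by auto
  define E where "E i = F (x i) - ?R (x i)" for i
  have E0: "E 0 = F c - ?R c" and En: "E n = 0" using x0 xn by (auto simp: E_def right_lim_def)
  have "(\<Sum>i<n. \<phi> i * (F (x (Suc i)) - F (x i))) - (\<Sum>i<n. \<phi> i * (?R (x (Suc i)) - ?R (x i)))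
      = (\<Sum>i<n. \<phi> i * (E (Suc i) - E i))"
    unfolding sum_subtractf[symmetric] by (intro sum.cong refl) (simp add: E_def algebra_simps)
  also have "\<dots> = \<phi> 0 * (?R c - F c) + (\<Sum>i<m. (\<phi> i - \<phi> (Suc i)) * E (Suc i))"
    unfolding nm sum_by_parts En[unfolded nm] E0 by (simp add: algebra_simps)
  finally have diff: "(\<Sum>i<n. \<phi> i * (F (x (Suc i)) - F (x i)))
      - ((\<Sum>i<n. \<phi> i * (?R (x (Suc i)) - ?R (x i))) + \<phi> 0 * (?R c - F c))
      = (\<Sum>i<m. (\<phi> i - \<phi> (Suc i)) * E (Suc i))"
    by simp
  have "\<bar>\<Sum>i<m. (\<phi> i - \<phi> (Suc i)) * E (Suc i)\<bar> \<le> (\<Sum>i<m. \<eta> * (F (x (Suc (Suc i))) - F (x (Suc i))))"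
  proof (rule order_trans[OF sum_abs sum_mono])
    fix i assume i: "i \<in> {..<m}"
    have x1: "x (Suc i) \<in> {c..d}" "x (Suc i) < x (Suc (Suc i))" "x (Suc (Suc i)) \<le> d"
      using xin[of "Suc i"] xin[of "Suc (Suc i)"] inc i nm by auto
    have "F (x (Suc i)) \<le> ?R (x (Suc i))" "?R (x (Suc i)) \<le> F (x (Suc (Suc i)))"
      using right_lim_bounds(1,2)[OF F_mono] x1 by auto
    then have "\<bar>E (Suc i)\<bar> \<le> F (x (Suc (Suc i))) - F (x (Suc i))" unfolding E_def by simp
    then show "\<bar>(\<phi> i - \<phi> (Suc i)) * E (Suc i)\<bar> \<le> \<eta> * (F (x (Suc (Suc i))) - F (x (Suc i)))"
      unfolding abs_mult using \<phi>[of i] i nm \<eta> by (intro mult_mono) auto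
  qed
  also have "\<dots> = \<eta> * (F d - F (x 1))"
    unfolding sum_distrib_left[symmetric] using sum_lessThan_telescope[of "\<lambda>i. F (x (Suc i))" m] xn nm by simp
  also have "\<dots> \<le> \<eta> * (F d - F c)"
    using mono_onD[OF F_mono, of c "x 1"] xin[of 0] xin[of 1] nm \<eta> x0 by (intro mult_left_mono) auto
  finally show ?thesis unfolding diff .
qed

lemma RS_has_integral_point: "RS_has_integral f F c c 0"
  unfolding RS_has_integral_def
proof (intro allI impI exI[of _ 1] conjI)
  fix \<epsilon> :: real and n x t assume \<epsilon>: "0 < \<epsilon>" and P: "x 0 = c \<and> x n = c \<and>
    (\<forall>i<n. x i < x (Suc i) \<and> x (Suc i) - x i < 1 \<and> x i \<le> t i \<and> t i \<le> x (Suc i))"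
  then have "n = 0" using partition_mono[of n x 1 n] by (cases n) auto
  then show "\<bar>(\<Sum>i<n. f (t i) * (F (x (Suc i)) - F (x i))) - 0\<bar> < \<epsilon>" using \<epsilon> by simp
qed simp

context
  fixes c d :: real and F :: "real \<Rightarrow> real" and \<mu> :: "real measure"
  assumes F_mono: "mono_on {c..d} F" and cd: "c \<le> d"
    and sets_\<mu>: "sets \<mu> = sets (restrict_space borel {c..d})" and finite_\<mu>: "finite_measure \<mu>"
    and cdf_\<mu>: "\<And>s. s \<in> {c..d} \<Longrightarrow> measure \<mu> {c..s} = right_lim d F s - F c"
begin

lemma space_cdf_measure: "space \<mu> = {c..d}"
  using sets_eq_imp_space_eq[OF sets_\<mu>] by (simp add: space_restrict_space)

lemma sets_cdf_measureI: "A \<subseteq> {c..d} \<Longrightarrow> A \<in> sets borel \<Longrightarrow> A \<in> sets \<mu>"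
  unfolding sets_\<mu> by (subst sets_restrict_space_iff) auto

lemma measure_cdf_Ioc:
  assumes "c \<le> u" "u \<le> v" "v \<le> d"
  shows "measure \<mu> {u<..v} = right_lim d F v - right_lim d F u"
proof -
  have "{u<..v} = {c..v} - {c..u}" using assms by auto
  then have "measure \<mu> {u<..v} = measure \<mu> {c..v} - measure \<mu> {c..u}"
    using assms by (simp add: finite_measure.finite_measure_Diff[OF finite_\<mu>] sets_cdf_measureI)
  then show ?thesis using cdf_\<mu> assms by simp
qed

lemma
  fixes x \<phi> :: "nat \<Rightarrow> real"
  assumes x0: "x 0 = c" and xn: "x n = d" and inc: "\<forall>i<n. x i < x (Suc i)"
  defines "s \<equiv> \<lambda>u. (\<Sum>i<n. \<phi> i * indicator {x i<..x (Suc i)} u) + \<phi> 0 * indicator {c} u"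
  shows integrable_cdf_step: "integrable \<mu> s"
    and integral_cdf_step: "(\<integral>u. s u \<partial>\<mu>)
      = (\<Sum>i<n. \<phi> i * (right_lim d F (x (Suc i)) - right_lim d F (x i))) + \<phi> 0 * (right_lim d F c - F c)"
proof -
  interpret finite_measure \<mu> by (rule finite_\<mu>)
  have xin: "x i \<in> {c..d}" if "i \<le> n" for i
    using partition_mono[OF inc, of 0 i] partition_mono[OF inc, of i n] that x0 xn by auto
  have Ioc: "{x i<..x (Suc i)} \<in> sets \<mu>" "{x i<..x (Suc i)} \<inter> space \<mu> = {x i<..x (Suc i)}" if "i < n" for i
    using xin[of i] xin[of "Suc i"] that by (auto intro!: sets_cdf_measureI simp: space_cdf_measure)
  have c: "{c} \<in> sets \<mu>" "{c} \<inter> space \<mu> = {c}" using cd by (auto intro!: sets_cdf_measureI simp: space_cdf_measure)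
  have int_Ioc: "integrable \<mu> (\<lambda>u. \<phi> i * indicator {x i<..x (Suc i)} u)" if "i \<in> {..<n}" for i
    using Ioc that by (auto intro!: integrable_mult_right integrable_real_indicator simp: emeasure_eq_measure)
  have int_sum: "integrable \<mu> (\<lambda>u. \<Sum>i<n. \<phi> i * indicator {x i<..x (Suc i)} u)"
    by (rule Bochner_Integration.integrable_sum[OF int_Ioc])
  have int_c: "integrable \<mu> (\<lambda>u. \<phi> 0 * indicator {c} u)"
    using c by (auto intro!: integrable_mult_right integrable_real_indicator simp: emeasure_eq_measure)
  show "integrable \<mu> s" unfolding s_def by (rule Bochner_Integration.integrable_add[OF int_sum int_c])
  have "(\<integral>u. s u \<partial>\<mu>) = (\<integral>u. (\<Sum>i<n. \<phi> i * indicator {x i<..x (Suc i)} u) \<partial>\<mu>) + (\<integral>u. \<phi> 0 * indicator {c} u \<partial>\<mu>)"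
    unfolding s_def by (rule Bochner_Integration.integral_add[OF int_sum int_c])
  also have "(\<integral>u. (\<Sum>i<n. \<phi> i * indicator {x i<..x (Suc i)} u) \<partial>\<mu>) = (\<Sum>i<n. (\<integral>u. \<phi> i * indicator {x i<..x (Suc i)} u \<partial>\<mu>))"
    by (rule Bochner_Integration.integral_sum[OF int_Ioc])
  also have "\<dots> = (\<Sum>i<n. \<phi> i * measure \<mu> {x i<..x (Suc i)})"
    using Ioc by (intro sum.cong refl) simp
  also have "(\<integral>u. \<phi> 0 * indicator {c} u \<partial>\<mu>) = \<phi> 0 * measure \<mu> {c}"
    using c by simp
  also have "(\<Sum>i<n. \<phi> i * measure \<mu> {x i<..x (Suc i)}) = (\<Sum>i<n. \<phi> i * (right_lim d F (x (Suc i)) - right_lim d F (x i)))"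
    using xin inc by (intro sum.cong refl) (subst measure_cdf_Ioc, auto)
  also have "measure \<mu> {c} = right_lim d F c - F c" using cdf_\<mu>[of c] cd by simp
  finally show "(\<integral>u. s u \<partial>\<mu>)
      = (\<Sum>i<n. \<phi> i * (right_lim d F (x (Suc i)) - right_lim d F (x i))) + \<phi> 0 * (right_lim d F c - F c)" .
qed

lemma integral_cdf_approx:
  fixes x t :: "nat \<Rightarrow> real"
  assumes f: "continuous_on {c..d} f"
    and x0: "x 0 = c" and xn: "x n = d" and inc: "\<forall>i<n. x i < x (Suc i)" and n: "0 < n"
    and osc: "\<And>i u. i < n \<Longrightarrow> u \<in> {x i..x (Suc i)} \<Longrightarrow> \<bar>f u - f (t i)\<bar> \<le> \<eta>"
  shows "\<bar>(\<integral>u. f u \<partial>\<mu>) - ((\<Sum>i<n. f (t i) * (right_lim d F (x (Suc i)) - right_lim d F (x i)))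
      + f (t 0) * (right_lim d F c - F c))\<bar> \<le> \<eta> * (F d - F c)"
proof -
  interpret finite_measure \<mu> by (rule finite_\<mu>)
  define s where "s = (\<lambda>u. (\<Sum>i<n. f (t i) * indicator {x i<..x (Suc i)} u) + f (t 0) * indicator {c} u)"
  have f_meas: "f \<in> borel_measurable \<mu>"
    by (subst measurable_cong_sets[OF sets_\<mu> refl]) (rule borel_measurable_continuous_on_restrict[OF f])
  obtain B where "\<forall>u\<in>{c..d}. norm (f u) \<le> B"
    using compact_imp_bounded[OF compact_continuous_image[OF f compact_Icc]] by (auto simp: bounded_iff)
  then have f_int: "integrable \<mu> f"
    using f_meas by (intro integrable_const_bound[where B=B]) (auto simp: space_cdf_measure)
  have s_int: "integrable \<mu> s"
    unfolding s_def by (rule integrable_cdf_step[where \<phi>="\<lambda>i. f (t i)", OF x0 xn inc])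
  have close: "\<bar>f u - s u\<bar> \<le> \<eta>" if u: "u \<in> {c..d}" for u
  proof -
    have pou: "(\<Sum>i<n. indicator {x i<..x (Suc i)} u) + indicator {c} u = (1::real)"
      using sum_indicator_partition[OF inc, of u] x0 xn u by (auto simp: indicator_def)
    have "f u = f u * ((\<Sum>i<n. indicator {x i<..x (Suc i)} u) + indicator {c} u)" using pou by simp
    then have "f u - s u = (\<Sum>i<n. (f u - f (t i)) * indicator {x i<..x (Suc i)} u) + (f u - f (t 0)) * indicator {c} u"
      unfolding s_def by (simp add: algebra_simps sum_distrib_left sum_subtractf)
    also have "\<bar>\<dots>\<bar> \<le> (\<Sum>i<n. \<bar>(f u - f (t i)) * indicator {x i<..x (Suc i)} u\<bar>) + \<bar>(f u - f (t 0)) * indicator {c} u\<bar>"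
      by (rule order_trans[OF abs_triangle_ineq add_right_mono[OF sum_abs]])
    also have "\<dots> \<le> (\<Sum>i<n. \<eta> * indicator {x i<..x (Suc i)} u) + \<eta> * indicator {c} u"
    proof (intro add_mono sum_mono)
      fix i assume i: "i \<in> {..<n}"
      show "\<bar>(f u - f (t i)) * indicator {x i<..x (Suc i)} u\<bar> \<le> \<eta> * indicator {x i<..x (Suc i)} u"
        using osc[of i u] i by (auto simp: indicator_def)
    next
      show "\<bar>(f u - f (t 0)) * indicator {c} u\<bar> \<le> \<eta> * indicator {c} u"
        using osc[of 0 c] n inc x0 by (auto simp: indicator_def)
    qed
    also have "\<dots> = \<eta> * ((\<Sum>i<n. indicator {x i<..x (Suc i)} u) + indicator {c} u)"
      by (simp add: sum_distrib_left algebra_simps)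
    also have "\<dots> = \<eta>" using pou by simp
    finally show ?thesis .
  qed
  have "\<bar>\<integral>u. f u - s u \<partial>\<mu>\<bar> \<le> (\<integral>u. \<eta> \<partial>\<mu>)"
    using f_int s_int close by (intro integral_abs_bound_integral) (auto simp: space_cdf_measure)
  also have "\<dots> = \<eta> * (F d - F c)"
    using cdf_\<mu>[of d] cd by (simp add: space_cdf_measure right_lim_def mult.commute)
  finally have "\<bar>(\<integral>u. f u \<partial>\<mu>) - (\<integral>u. s u \<partial>\<mu>)\<bar> \<le> \<eta> * (F d - F c)" using f_int s_int by simp
  then show ?thesis unfolding s_def integral_cdf_step[where \<phi>="\<lambda>i. f (t i)", OF x0 xn inc] .
qed

lemma RS_has_integral_of_cdf:
  assumes f: "continuous_on {c..d} f"
  shows "RS_has_integral f F c d (\<integral>u. f u \<partial>\<mu>)"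
proof (cases "c = d")
  case True
  have "emeasure \<mu> (space \<mu>) = 0"
    using cdf_\<mu>[of d] True finite_measure.emeasure_eq_measure[OF finite_\<mu>]
    by (simp add: space_cdf_measure right_lim_def)
  then have "AE u in \<mu>. f u = 0" by (intro AE_I'[where N="space \<mu>"]) auto
  then have "(\<integral>u. f u \<partial>\<mu>) = 0" by (rule integral_eq_zero_AE)
  then show ?thesis using RS_has_integral_point True by simp
next
  case False
  then have c_less_d: "c < d" using cd by simp
  have FcFd: "F c \<le> F d" using mono_onD[OF F_mono] cd by auto
  show ?thesis unfolding RS_has_integral_def
  proof (intro allI impI)
    fix \<epsilon> :: real assume \<epsilon>: "0 < \<epsilon>"
    define \<eta> where "\<eta> = \<epsilon> / (2 * (F d - F c) + 2)"
    have \<eta>: "0 < \<eta>" unfolding \<eta>_def using \<epsilon> FcFd by (intro divide_pos_pos) auto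
    have "2 * \<eta> * (F d - F c) = \<epsilon> * (2 * (F d - F c)) / (2 * (F d - F c) + 2)"
      unfolding \<eta>_def by (simp add: field_simps)
    also have "\<dots> < \<epsilon>" using \<epsilon> FcFd by (simp add: field_simps)
    finally have small: "2 * \<eta> * (F d - F c) < \<epsilon>" .
    obtain \<delta> where \<delta>: "\<delta> > 0"
      and uc: "\<And>u v. u \<in> {c..d} \<Longrightarrow> v \<in> {c..d} \<Longrightarrow> \<bar>u - v\<bar> < \<delta> \<Longrightarrow> \<bar>f u - f v\<bar> < \<eta>"
      using compact_uniformly_continuous[OF f compact_Icc] \<eta>
      unfolding uniformly_continuous_on_def dist_real_def by metis
    show "\<exists>\<delta>>0. \<forall>n x t. x 0 = c \<and> x n = d \<and>
        (\<forall>i<n. x i < x (Suc i) \<and> x (Suc i) - x i < \<delta> \<and> x i \<le> t i \<and> t i \<le> x (Suc i)) \<longrightarrow>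
        \<bar>(\<Sum>i<n. f (t i) * (F (x (Suc i)) - F (x i))) - (\<integral>u. f u \<partial>\<mu>)\<bar> < \<epsilon>"
    proof (intro exI[of _ "\<delta>/2"] conjI allI impI)
      fix n x t assume P: "x 0 = c \<and> x n = d \<and>
        (\<forall>i<n. x i < x (Suc i) \<and> x (Suc i) - x i < \<delta>/2 \<and> x i \<le> t i \<and> t i \<le> x (Suc i))"
      then have x0: "x 0 = c" and xn: "x n = d" and inc: "\<forall>i<n. x i < x (Suc i)"
        and step: "\<And>i. i < n \<Longrightarrow> x (Suc i) - x i < \<delta>/2 \<and> x i \<le> t i \<and> t i \<le> x (Suc i)" by auto
      have n: "0 < n" using x0 xn c_less_d by (cases n) auto
      have xin: "x i \<in> {c..d}" if "i \<le> n" for i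
        using partition_mono[OF inc, of 0 i] partition_mono[OF inc, of i n] that x0 xn by auto
      have tin: "t i \<in> {c..d}" if "i < n" for i
        using xin[of i] xin[of "Suc i"] step[OF that] that by auto
      have osc: "\<bar>f u - f (t i)\<bar> \<le> \<eta>" if "i < n" "u \<in> {x i..x (Suc i)}" for i u
      proof -
        have "\<bar>u - t i\<bar> < \<delta>" using step[OF that(1)] that(2) by (auto simp: abs_less_iff)
        moreover have "u \<in> {c..d}" using xin[of i] xin[of "Suc i"] that by auto
        ultimately show ?thesis using uc[OF _ tin[OF that(1)]] by fastforce
      qed
      have osc_tags: "\<bar>f (t i) - f (t (Suc i))\<bar> \<le> \<eta>" if "Suc i < n" for i
        using uc[OF tin[of i] tin[of "Suc i"]] step[of i] step[of "Suc i"] that by auto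
      have "\<bar>(\<Sum>i<n. f (t i) * (F (x (Suc i)) - F (x i)))
          - ((\<Sum>i<n. f (t i) * (right_lim d F (x (Suc i)) - right_lim d F (x i))) + f (t 0) * (right_lim d F c - F c))\<bar>
          \<le> \<eta> * (F d - F c)"
        by (rule RS_sum_right_lim_approx[OF F_mono x0 xn inc n]) (use osc_tags \<eta> in auto)
      moreover have "\<bar>(\<integral>u. f u \<partial>\<mu>)
          - ((\<Sum>i<n. f (t i) * (right_lim d F (x (Suc i)) - right_lim d F (x i))) + f (t 0) * (right_lim d F c - F c))\<bar>
          \<le> \<eta> * (F d - F c)"
        by (rule integral_cdf_approx[OF f x0 xn inc n]) (use osc in auto)
      ultimately have "\<bar>(\<Sum>i<n. f (t i) * (F (x (Suc i)) - F (x i))) - (\<integral>u. f u \<partial>\<mu>)\<bar> \<le> 2 * \<eta> * (F d - F c)"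
        by linarith
      then show "\<bar>(\<Sum>i<n. f (t i) * (F (x (Suc i)) - F (x i))) - (\<integral>u. f u \<partial>\<mu>)\<bar> < \<epsilon>"
        using small by linarith
    qed (use \<delta> in simp)
  qed
qed

end

lemma RS_has_integral_unique:
  assumes I: "RS_has_integral f F c d I" and J: "RS_has_integral f F c d J" and cd: "c \<le> d"
  shows "I = J"
proof -
  have *: "\<bar>I - J\<bar> < 2 * \<epsilon>" if e: "\<epsilon> > 0" for \<epsilon>
  proof -
    from I[unfolded RS_has_integral_def, rule_format, OF e] obtain \<delta>1 where d1: "\<delta>1 > 0" and P1: "\<forall>n x t. x 0 = c \<and> x n = d \<and>
         (\<forall>i<n. x i < x (Suc i) \<and> x (Suc i) - x i < \<delta>1 \<and> x i \<le> t i \<and> t i \<le> x (Suc i))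
        \<longrightarrow> \<bar>(\<Sum>i<n. f (t i) * (F (x (Suc i)) - F (x i))) - I\<bar> < \<epsilon>" by blast
    from J[unfolded RS_has_integral_def, rule_format, OF e] obtain \<delta>2 where d2: "\<delta>2 > 0" and P2: "\<forall>n x t. x 0 = c \<and> x n = d \<and>
         (\<forall>i<n. x i < x (Suc i) \<and> x (Suc i) - x i < \<delta>2 \<and> x i \<le> t i \<and> t i \<le> x (Suc i))
        \<longrightarrow> \<bar>(\<Sum>i<n. f (t i) * (F (x (Suc i)) - F (x i))) - J\<bar> < \<epsilon>" by blast
    show ?thesis
    proof (cases "c = d")
      case True
      have "\<bar>(\<Sum>i<(0::nat). f ((\<lambda>_. c) i) * (F ((\<lambda>_. c) (Suc i)) - F ((\<lambda>_. c) i))) - I\<bar> < \<epsilon>"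
        by (rule P1[rule_format]) (use True in auto)
      moreover have "\<bar>(\<Sum>i<(0::nat). f ((\<lambda>_. c) i) * (F ((\<lambda>_. c) (Suc i)) - F ((\<lambda>_. c) i))) - J\<bar> < \<epsilon>"
        by (rule P2[rule_format]) (use True in auto)
      ultimately show ?thesis by simp
    next
      case False
      then have cd': "c < d" using cd by simp
      let ?\<delta> = "min \<delta>1 \<delta>2"
      obtain n :: nat where n: "(d - c) / ?\<delta> < n" using reals_Archimedean2 by blast
      have dpos: "?\<delta> > 0" using d1 d2 by simp
      have npos: "n > 0" using n cd' dpos by (cases n) (auto simp: field_simps)
      have h1: "d - c < n * ?\<delta>" using n dpos by (simp add: divide_less_eq mult.commute)
      have h: "(d - c) / n < ?\<delta>" using h1 npos by (subst divide_less_eq) (auto simp: mult.commute)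
      define x where "x i = c + real i * ((d - c) / n)" for i
      have hpos: "(d - c) / n > 0" using cd' npos by simp
      have cond: "\<And>\<delta>. ?\<delta> \<le> \<delta> \<Longrightarrow> x 0 = c \<and> x n = d \<and> (\<forall>i<n. x i < x (Suc i) \<and> x (Suc i) - x i < \<delta> \<and> x i \<le> x i \<and> x i \<le> x (Suc i))"
      proof -
        fix \<delta> assume "?\<delta> \<le> \<delta>"
        have diff: "x (Suc i) = x i + (d - c) / n" for i unfolding x_def by (simp add: distrib_right add_divide_distrib)
        have xn: "x n = d" unfolding x_def using npos by simp
        have x0: "x 0 = c" unfolding x_def by simp
        have hd: "(d - c) / n < \<delta>" using h \<open>?\<delta> \<le> \<delta>\<close> by linarith
        show "x 0 = c \<and> x n = d \<and> (\<forall>i<n. x i < x (Suc i) \<and> x (Suc i) - x i < \<delta> \<and> x i \<le> x i \<and> x i \<le> x (Suc i))"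
          using hd hpos by (simp add: diff x0 xn)
      qed
      have "\<bar>(\<Sum>i<n. f (x i) * (F (x (Suc i)) - F (x i))) - I\<bar> < \<epsilon>" by (rule P1[rule_format]) (rule cond, simp)
      moreover have "\<bar>(\<Sum>i<n. f (x i) * (F (x (Suc i)) - F (x i))) - J\<bar> < \<epsilon>" by (rule P2[rule_format]) (rule cond, simp)
      ultimately show ?thesis by linarith
    qed
  qed
  show ?thesis
  proof (rule ccontr)
    assume "I \<noteq> J"
    then have "\<bar>I - J\<bar> / 4 > 0" by simp
    from *[OF this] show False by simp
  qed
qed

lemma finite_measure_eq_by_cdf:
  fixes \<mu> \<nu> :: "real measure"
  assumes sm: "sets \<mu> = sets (restrict_space borel {c..d})" and sn: "sets \<nu> = sets (restrict_space borel {c..d})"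
    and fm: "finite_measure \<mu>" and fn: "finite_measure \<nu>" and cd: "c \<le> d"
    and eq: "\<forall>s\<in>{c..d}. measure \<mu> {c..s} = measure \<nu> {c..s}"
  shows "\<mu> = \<nu>"
proof -
  let ?E = "range (\<lambda>s. {c..d} \<inter> {..s::real})"
  have S: "sets (restrict_space borel {c..d}) = sigma_sets {c..d} ?E"
  proof -
    have "sets (restrict_space borel {c..d}) = (\<inter>) {c..d} ` sets (borel :: real measure)"
      by (rule sets_restrict_space)
    also have "sets (borel :: real measure) = sigma_sets UNIV (range atMost)"
      by (subst borel_eq_atMost) simp
    also have "(\<inter>) {c..d} ` sigma_sets UNIV (range atMost) = sigma_sets {c..d} ((\<inter>) {c..d} ` range atMost)"
    proof (rule sigma_sets_Int)
      have "{c..d} \<in> sets (borel :: real measure)" by simp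
      then show "{c..d} \<in> sigma_sets UNIV (range (atMost :: real \<Rightarrow> real set))"
        by (subst (asm) borel_eq_atMost) simp
    qed simp
    also have "(\<inter>) {c..d} ` range atMost = ?E" by (simp only: image_image)
    finally show ?thesis .
  qed
  show ?thesis
  proof (rule measure_eqI_generator_eq[where E = ?E and \<Omega> = "{c..d}" and A = "\<lambda>_. {c..d}"])
    show "Int_stable ?E"
      unfolding Int_stable_def
    proof (intro ballI)
      fix A B assume "A \<in> ?E" "B \<in> ?E"
      then obtain s t where "A = {c..d} \<inter> {..s}" "B = {c..d} \<inter> {..t}" by auto
      then have "A \<inter> B = {c..d} \<inter> {..min s t}" by auto
      then show "A \<inter> B \<in> ?E" by blast
    qed
    show "?E \<subseteq> Pow {c..d}" by auto
    fix X assume "X \<in> ?E"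
    then obtain s where X: "X = {c..d} \<inter> {..s}" by auto
    show "emeasure \<mu> X = emeasure \<nu> X"
    proof (cases "s < c")
      case True then have "X = {}" using X by auto
      then show ?thesis by simp
    next
      case False
      then have "X = {c..min s d}" "min s d \<in> {c..d}" using X cd by auto
      then show ?thesis unfolding finite_measure.emeasure_eq_measure[OF fm] finite_measure.emeasure_eq_measure[OF fn]
        using eq by simp
    qed
  next
    show "sets \<mu> = sigma_sets {c..d} ?E" using sm S by simp
    show "sets \<nu> = sigma_sets {c..d} ?E" using sn S by simp
    show "range (\<lambda>_. {c..d}) \<subseteq> ?E" by (auto intro!: image_eqI[of _ _ d])
    show "(\<Union>i::nat. {c..d}) = {c..d}" by simp
    show "\<And>i. emeasure \<mu> {c..d} \<noteq> \<infinity>" using finite_measure.emeasure_finite[OF fm] by simp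
  qed
qed

lemma finite_measure_eq_by_continuous_integrals:
  fixes \<mu> \<nu> :: "real measure"
  assumes sm: "sets \<mu> = sets (restrict_space borel {c..d})" and sn: "sets \<nu> = sets (restrict_space borel {c..d})"
    and fm: "finite_measure \<mu>" and fn: "finite_measure \<nu>" and cd: "c \<le> d"
    and eq: "\<And>f :: real \<Rightarrow> real. continuous_on {c..d} f \<Longrightarrow> (\<integral>x. f x \<partial>\<mu>) = (\<integral>x. f x \<partial>\<nu>)"
  shows "\<mu> = \<nu>"
proof (rule finite_measure_eq_by_cdf[OF sm sn fm fn cd], intro ballI)
  fix s assume s: "s \<in> {c..d}"
  define g where "g k u = max 0 (min 1 (1 - (real k + 1) * (u - s)))" for k :: nat and u :: real
  have gc: "continuous_on UNIV (g k)" for k unfolding g_def by (intro continuous_intros)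
  have glim: "(\<lambda>k. g k u) \<longlonglongrightarrow> indicator {..s} u" for u
  proof (cases "u \<le> s")
    case True
    have "g k u = 1" for k
    proof -
      have "(real k + 1) * (u - s) \<le> 0" using True by (intro mult_nonneg_nonpos) auto
      then show ?thesis unfolding g_def by auto
    qed
    then show ?thesis using True by simp
  next
    case False
    obtain N :: nat where N: "1 / (u - s) < N" using reals_Archimedean2 by blast
    have "g k u = 0" if "k \<ge> N" for k
    proof -
      have "1 < real N * (u - s)" using N False by (simp add: field_simps)
      also have "\<dots> \<le> (real k + 1) * (u - s)" using that False by (intro mult_right_mono) auto
      finally show ?thesis unfolding g_def by auto
    qed
    then have "eventually (\<lambda>k. g k u = 0) sequentially" by (auto simp: eventually_sequentially)
    then show ?thesis using False by (simp add: tendsto_eventually)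
  qed
  have lim: "(\<lambda>k. \<integral>u. g k u \<partial>M) \<longlonglongrightarrow> measure M {c..s}"
    if sM: "sets M = sets (restrict_space borel {c..d})" and fM: "finite_measure M" for M :: "real measure"
  proof -
    interpret finite_measure M by (rule fM)
    have sp: "space M = {c..d}" using sets_eq_imp_space_eq[OF sM] by (simp add: space_restrict_space)
    have meas: "h \<in> borel_measurable M" if "h \<in> borel_measurable borel" for h :: "real \<Rightarrow> real"
      by (subst measurable_cong_sets[OF sM refl]) (rule measurable_restrict_space1[OF that])
    have "(\<lambda>k. \<integral>u. g k u \<partial>M) \<longlonglongrightarrow> (\<integral>u. indicator {..s} u \<partial>M)"
    proof (rule integral_dominated_convergence[where w="\<lambda>_. 1"])
      show "(indicator {..s} :: real \<Rightarrow> real) \<in> borel_measurable M" by (rule meas) simp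
      show "g k \<in> borel_measurable M" for k by (rule meas, rule borel_measurable_continuous_onI[OF gc])
      show "integrable M (\<lambda>_. 1::real)" by simp
      show "AE x in M. (\<lambda>k. g k x) \<longlonglongrightarrow> indicator {..s} x" using glim by simp
      show "AE x in M. norm (g k x) \<le> 1" for k by (simp add: g_def)
    qed
    also have "(\<integral>u. indicator {..s} u \<partial>M) = measure M {c..s}"
    proof -
      have "{..s} \<inter> space M = {c..s}" using sp s by auto
      then show ?thesis by simp
    qed
    finally show ?thesis .
  qed
  have "(\<lambda>k. \<integral>u. g k u \<partial>\<mu>) = (\<lambda>k. \<integral>u. g k u \<partial>\<nu>)"
  proof
    fix k
    have "continuous_on {c..d} (g k)" using continuous_on_subset[OF gc] by blast
    then show "(\<integral>u. g k u \<partial>\<mu>) = (\<integral>u. g k u \<partial>\<nu>)" by (rule eq)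
  qed
  then show "measure \<mu> {c..s} = measure \<nu> {c..s}"
    using lim[OF sm fm] lim[OF sn fn] LIMSEQ_unique by metis
qed

lemma LS_measure_eqI:
  fixes F :: "real \<Rightarrow> real"
  assumes F_mono: "mono_on {c..d} F" and cd: "c \<le> d"
    and sets_\<mu>: "sets \<mu> = sets (restrict_space borel {c..d})" and finite_\<mu>: "finite_measure \<mu>"
    and cdf_\<mu>: "\<And>s. s \<in> {c..d} \<Longrightarrow> measure \<mu> {c..s} = right_lim d F s - F c"
  shows "LS_measure c d F = \<mu>"
  unfolding LS_measure_def
proof (rule the_equality)
  have RS: "\<forall>f. continuous_on {c..d} f \<longrightarrow> RS_has_integral f F c d (\<integral>x. f x \<partial>\<mu>)"
    using RS_has_integral_of_cdf[OF F_mono cd sets_\<mu> finite_\<mu> cdf_\<mu>] by blast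
  then show "sets \<mu> = sets (restrict_space borel {c..d}) \<and> finite_measure \<mu> \<and>
      (\<forall>f. continuous_on {c..d} f \<longrightarrow> RS_has_integral f F c d (\<integral>x. f x \<partial>\<mu>))"
    using sets_\<mu> finite_\<mu> by blast
  fix \<nu> assume \<nu>: "sets \<nu> = sets (restrict_space borel {c..d}) \<and> finite_measure \<nu> \<and>
      (\<forall>f. continuous_on {c..d} f \<longrightarrow> RS_has_integral f F c d (\<integral>x. f x \<partial>\<nu>))"
  show "\<nu> = \<mu>"
  proof (rule finite_measure_eq_by_continuous_integrals[of _ c d])
    fix f :: "real \<Rightarrow> real" assume "continuous_on {c..d} f"
    then show "(\<integral>x. f x \<partial>\<nu>) = (\<integral>x. f x \<partial>\<mu>)" using \<nu> RS RS_has_integral_unique cd by blast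
  qed (use \<nu> sets_\<mu> finite_\<mu> cd in auto)
qed

lemma
  fixes F :: "real \<Rightarrow> real"
  assumes "mono_on {c..d} F" "c \<le> d"
  shows sets_LS_measure: "sets (LS_measure c d F) = sets (restrict_space borel {c..d})"
    and finite_measure_LS_measure: "finite_measure (LS_measure c d F)"
    and measure_LS_measure_Icc:
      "s \<in> {c..d} \<Longrightarrow> measure (LS_measure c d F) {c..s} = right_lim d F s - F c"
proof -
  obtain \<mu> where \<mu>: "sets \<mu> = sets (restrict_space borel {c..d})" "finite_measure \<mu>"
    "\<forall>s\<in>{c..d}. measure \<mu> {c..s} = right_lim d F s - F c"
    using exists_measure_with_cdf[OF assms] by blast
  moreover from \<mu> have "LS_measure c d F = \<mu>" by (intro LS_measure_eqI[OF assms]) auto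
  ultimately show "sets (LS_measure c d F) = sets (restrict_space borel {c..d})"
    "finite_measure (LS_measure c d F)"
    "s \<in> {c..d} \<Longrightarrow> measure (LS_measure c d F) {c..s} = right_lim d F s - F c"
    by auto
qed

section \<open>Sums of finite measures and weighted point masses\<close>

definition add_measure :: "'a measure \<Rightarrow> 'a measure \<Rightarrow> 'a measure" where
  "add_measure A B = measure_of (space A) (sets A) (\<lambda>S. emeasure A S + emeasure B S)"

lemma sets_add_measure [simp]: "sets (add_measure A B) = sets A"
  by (simp add: add_measure_def)

lemma space_add_measure [simp]: "space (add_measure A B) = space A"
  by (simp add: add_measure_def)

context
  fixes A B :: "'a measure"
  assumes sets_B: "sets B = sets A"
begin

lemma emeasure_add_measure:
  assumes "S \<in> sets A"
  shows "emeasure (add_measure A B) S = emeasure A S + emeasure B S"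
  unfolding add_measure_def
proof (rule emeasure_measure_of_sigma[OF _ _ _ assms])
  show "sigma_algebra (space A) (sets A)" using measure_space[of A] by (simp add: measure_space_def)
  show "positive (sets A) (\<lambda>S. emeasure A S + emeasure B S)" by (simp add: positive_def)
  show "countably_additive (sets A) (\<lambda>S. emeasure A S + emeasure B S)"
    unfolding countably_additive_def
  proof (intro allI impI)
    fix F :: "nat \<Rightarrow> 'a set" assume F: "range F \<subseteq> sets A" "disjoint_family F"
    have "(\<Sum>i. emeasure A (F i) + emeasure B (F i)) = (\<Sum>i. emeasure A (F i)) + (\<Sum>i. emeasure B (F i))"
      by (rule suminf_add[symmetric]) auto
    also have "\<dots> = emeasure A (\<Union>i. F i) + emeasure B (\<Union>i. F i)"
      using suminf_emeasure[OF F] suminf_emeasure[of F B] F sets_B by simp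
    finally show "(\<Sum>i. emeasure A (F i) + emeasure B (F i)) = emeasure A (\<Union>(range F)) + emeasure B (\<Union>(range F))" .
  qed
qed

lemma nn_integral_add_measure:
  assumes "u \<in> borel_measurable A"
  shows "(\<integral>\<^sup>+x. u x \<partial>add_measure A B) = (\<integral>\<^sup>+x. u x \<partial>A) + (\<integral>\<^sup>+x. u x \<partial>B)"
  using assms
proof (induct rule: borel_measurable_induct)
  case (cong f g)
  have spB: "space B = space A" using sets_eq_imp_space_eq[OF sets_B] .
  have "(\<integral>\<^sup>+x. f x \<partial>M) = (\<integral>\<^sup>+x. g x \<partial>M)" if "space M = space A" for M
    using cong that by (intro nn_integral_cong) auto
  then show ?case using cong spB by simp
next
  case (set S)
  then show ?case using emeasure_add_measure sets_B by simp
next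
  case (mult u c)
  have "(\<integral>\<^sup>+x. c * u x \<partial>M) = c * (\<integral>\<^sup>+x. u x \<partial>M)" if "sets M = sets A" for M
    using mult by (intro nn_integral_cmult) (auto simp: measurable_cong_sets[OF that refl])
  then show ?case using mult sets_B by (simp add: distrib_left)
next
  case (add u v)
  have "(\<integral>\<^sup>+x. v x + u x \<partial>M) = (\<integral>\<^sup>+x. v x \<partial>M) + (\<integral>\<^sup>+x. u x \<partial>M)" if "sets M = sets A" for M
    using add by (intro nn_integral_add) (auto simp: measurable_cong_sets[OF that refl])
  then show ?case using add sets_B by (simp add: ac_simps)
next
  case (seq U)
  have meas: "U i \<in> borel_measurable M" if "sets M = sets A" for M i
    using seq(1)[of i] by (simp add: measurable_cong_sets[OF that refl])
  have SUP: "(\<integral>\<^sup>+x. (SUP i. U i) x \<partial>M) = (SUP i. (\<integral>\<^sup>+x. U i x \<partial>M))" if "sets M = sets A" for M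
    using nn_integral_monotone_convergence_SUP[OF seq(4) meas[OF that]] by (simp add: image_image)
  have inc: "incseq (\<lambda>i. (\<integral>\<^sup>+x. U i x \<partial>M))" for M
    using seq(4) by (auto simp: incseq_def le_fun_def intro!: nn_integral_mono)
  have "(\<integral>\<^sup>+x. (SUP i. U i) x \<partial>add_measure A B) = (SUP i. (\<integral>\<^sup>+x. U i x \<partial>A) + (\<integral>\<^sup>+x. U i x \<partial>B))"
    using SUP[of "add_measure A B"] seq(3) by simp
  also have "\<dots> = (SUP i. (\<integral>\<^sup>+x. U i x \<partial>A)) + (SUP i. (\<integral>\<^sup>+x. U i x \<partial>B))"
    by (rule ennreal_SUP_add[OF inc inc])
  finally show ?case using SUP[OF refl] SUP[OF sets_B] by simp
qed

lemma finite_measure_add_measure: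
  assumes "finite_measure A" "finite_measure B"
  shows "finite_measure (add_measure A B)"
proof
  have "space B = space A" using sets_eq_imp_space_eq[OF sets_B] .
  then show "emeasure (add_measure A B) (space (add_measure A B)) \<noteq> \<infinity>"
    using emeasure_add_measure[of "space A"] assms
    by (simp add: finite_measure.emeasure_finite ennreal_add_eq_top)
qed

lemma measure_add_measure:
  assumes "finite_measure A" "finite_measure B" "S \<in> sets A"
  shows "measure (add_measure A B) S = measure A S + measure B S"
proof -
  have "finite_measure (add_measure A B)" by (rule finite_measure_add_measure[OF assms(1,2)])
  then show ?thesis using emeasure_add_measure[OF assms(3)] assms
    by (simp add: finite_measure.emeasure_eq_measure ennreal_plus[symmetric] del: ennreal_plus)
qed

lemma
  fixes f :: "'a \<Rightarrow> real"
  assumes int_A: "integrable A f" and int_B: "integrable B f"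
  shows integrable_add_measure: "integrable (add_measure A B) f"
    and integral_add_measure: "integral\<^sup>L (add_measure A B) f = integral\<^sup>L A f + integral\<^sup>L B f"
proof -
  have f: "f \<in> borel_measurable A" using int_A by simp
  have nn_norm: "(\<integral>\<^sup>+x. ennreal (norm (f x)) \<partial>add_measure A B) = (\<integral>\<^sup>+x. ennreal (norm (f x)) \<partial>A) + (\<integral>\<^sup>+x. ennreal (norm (f x)) \<partial>B)"
    and nn_pos: "(\<integral>\<^sup>+x. ennreal (f x) \<partial>add_measure A B) = (\<integral>\<^sup>+x. ennreal (f x) \<partial>A) + (\<integral>\<^sup>+x. ennreal (f x) \<partial>B)"
    and nn_neg: "(\<integral>\<^sup>+x. ennreal (- f x) \<partial>add_measure A B) = (\<integral>\<^sup>+x. ennreal (- f x) \<partial>A) + (\<integral>\<^sup>+x. ennreal (- f x) \<partial>B)"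
    using f by (auto intro!: nn_integral_add_measure)
  have "(\<integral>\<^sup>+x. ennreal (norm (f x)) \<partial>add_measure A B) < \<infinity>"
    unfolding nn_norm using int_A int_B by (simp add: integrable_iff_bounded ennreal_add_less_top)
  then show int: "integrable (add_measure A B) f"
    using f by (simp add: integrable_iff_bounded measurable_cong_sets[OF sets_add_measure refl])
  have fin: "(\<integral>\<^sup>+x. ennreal (f x) \<partial>M) < \<infinity>" "(\<integral>\<^sup>+x. ennreal (- f x) \<partial>M) < \<infinity>" if "integrable M f" for M
  proof -
    have "(\<integral>\<^sup>+x. ennreal (f x) \<partial>M) \<le> (\<integral>\<^sup>+x. ennreal (norm (f x)) \<partial>M)"
      "(\<integral>\<^sup>+x. ennreal (- f x) \<partial>M) \<le> (\<integral>\<^sup>+x. ennreal (norm (f x)) \<partial>M)"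
      by (auto intro!: nn_integral_mono)
    moreover have "(\<integral>\<^sup>+x. ennreal (norm (f x)) \<partial>M) < \<infinity>" using that by (simp add: integrable_iff_bounded)
    ultimately show "(\<integral>\<^sup>+x. ennreal (f x) \<partial>M) < \<infinity>" "(\<integral>\<^sup>+x. ennreal (- f x) \<partial>M) < \<infinity>" by auto
  qed
  show "integral\<^sup>L (add_measure A B) f = integral\<^sup>L A f + integral\<^sup>L B f"
    unfolding real_lebesgue_integral_def[OF int] real_lebesgue_integral_def[OF int_A]
      real_lebesgue_integral_def[OF int_B] nn_pos nn_neg
    using fin[OF int_A] fin[OF int_B] by (simp add: enn2real_plus)
qed

end

text \<open>The measure \<open>\<Sum>\<^bsub>y \<in> H\<^esub> w y \<cdot> \<delta>\<^bsub>Z y\<^esub>\<close> on \<open>\<Omega>\<close>.\<close>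

definition weighted_atoms :: "'a measure \<Rightarrow> 'b set \<Rightarrow> ('b \<Rightarrow> real) \<Rightarrow> ('b \<Rightarrow> 'a) \<Rightarrow> 'a measure" where
  "weighted_atoms \<Omega> H w Z = distr (density (count_space H) (\<lambda>y. ennreal (w y))) \<Omega> Z"

lemma sets_weighted_atoms [simp]: "sets (weighted_atoms \<Omega> H w Z) = sets \<Omega>"
  by (simp add: weighted_atoms_def)

context
  fixes \<Omega> :: "'a measure" and H :: "'b set" and w :: "'b \<Rightarrow> real" and Z :: "'b \<Rightarrow> 'a"
  assumes w_nonneg: "\<And>y. y \<in> H \<Longrightarrow> 0 \<le> w y" and w_summable: "w summable_on H"
    and Z_in: "\<And>y. y \<in> H \<Longrightarrow> Z y \<in> space \<Omega>"
begin

lemma measurable_weighted_atoms_point: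
  "Z \<in> measurable (density (count_space H) (\<lambda>y. ennreal (w y))) \<Omega>"
  using Z_in by (subst measurable_cong_sets[OF sets_density refl]) auto

lemma abs_summable_on_weights: "Infinite_Set_Sum.abs_summable_on w H"
  using w_summable abs_summable_equivalent summable_on_iff_abs_summable_on_real by blast

lemma finite_measure_weighted_atoms: "finite_measure (weighted_atoms \<Omega> H w Z)"
proof
  let ?D = "density (count_space H) (\<lambda>y. ennreal (w y))"
  have "emeasure (weighted_atoms \<Omega> H w Z) (space (weighted_atoms \<Omega> H w Z)) = emeasure ?D (Z -` space \<Omega> \<inter> H)"
    unfolding weighted_atoms_def by (subst emeasure_distr[OF measurable_weighted_atoms_point]) auto
  also have "Z -` space \<Omega> \<inter> H = H" using Z_in by auto
  also have "emeasure ?D H = (\<integral>\<^sup>+y. ennreal (w y) \<partial>count_space H)"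
    by (subst emeasure_density) (auto intro!: nn_integral_cong)
  also have "\<dots> = ennreal (infsetsum w H)"
    using nn_integral_conv_infsetsum[OF abs_summable_on_weights] w_nonneg by simp
  finally show "emeasure (weighted_atoms \<Omega> H w Z) (space (weighted_atoms \<Omega> H w Z)) \<noteq> \<infinity>" by simp
qed

lemma integral_weighted_atoms:
  fixes f :: "'a \<Rightarrow> real"
  assumes f: "f \<in> borel_measurable \<Omega>" and f_bdd: "bounded (f ` space \<Omega>)"
  shows "integral\<^sup>L (weighted_atoms \<Omega> H w Z) f = (\<Sum>\<^sub>\<infinity>y\<in>H. f (Z y) * w y)"
proof -
  obtain B where B: "\<And>u. u \<in> space \<Omega> \<Longrightarrow> \<bar>f u\<bar> \<le> B"
    using f_bdd unfolding bounded_iff by (metis image_eqI real_norm_def)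
  have "integral\<^sup>L (weighted_atoms \<Omega> H w Z) f = integral\<^sup>L (density (count_space H) (\<lambda>y. ennreal (w y))) (\<lambda>y. f (Z y))"
    unfolding weighted_atoms_def by (rule integral_distr[OF measurable_weighted_atoms_point f])
  also have "density (count_space H) (\<lambda>y. ennreal (w y)) = density (count_space H) (\<lambda>y. ennreal (max 0 (w y)))"
    by (intro density_cong) (auto simp: w_nonneg max_def)
  also have "integral\<^sup>L \<dots> (\<lambda>y. f (Z y)) = (\<integral>y. max 0 (w y) *\<^sub>R f (Z y) \<partial>count_space H)"
    by (rule integral_density) auto
  also have "\<dots> = infsetsum (\<lambda>y. f (Z y) * w y) H"
    unfolding infsetsum_def by (intro Bochner_Integration.integral_cong) (auto simp: w_nonneg max_def)
  also have "\<dots> = (\<Sum>\<^sub>\<infinity>y\<in>H. f (Z y) * w y)"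
  proof (rule infsetsum_infsum)
    have "Infinite_Set_Sum.abs_summable_on (\<lambda>y. B * w y) H" using abs_summable_on_weights by auto
    then show "Infinite_Set_Sum.abs_summable_on (\<lambda>y. f (Z y) * w y) H"
    proof (rule abs_summable_on_comparison_test')
      fix y assume y: "y \<in> H"
      have "\<bar>f (Z y)\<bar> * w y \<le> B * w y" using B[OF Z_in[OF y]] w_nonneg[OF y] by (intro mult_right_mono) auto
      then show "norm (f (Z y) * w y) \<le> B * w y" using w_nonneg[OF y] by (simp add: abs_mult)
    qed
  qed
  finally show ?thesis .
qed

lemma measure_weighted_atoms:
  assumes S: "S \<in> sets \<Omega>"
  shows "measure (weighted_atoms \<Omega> H w Z) S = (\<Sum>\<^sub>\<infinity>y\<in>{y\<in>H. Z y \<in> S}. w y)"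
proof -
  have "measure (weighted_atoms \<Omega> H w Z) S = integral\<^sup>L (weighted_atoms \<Omega> H w Z) (indicator S)"
    using S finite_measure.emeasure_finite[OF finite_measure_weighted_atoms] by simp
  also have "\<dots> = (\<Sum>\<^sub>\<infinity>y\<in>H. indicator S (Z y) * w y)"
  proof (rule integral_weighted_atoms)
    show "bounded (indicator S ` space \<Omega> :: real set)"
      by (rule bounded_subset[of "{0, 1}"]) (auto simp: indicator_def)
  qed (use S in simp)
  also have "\<dots> = (\<Sum>\<^sub>\<infinity>y\<in>{y\<in>H. Z y \<in> S}. w y)"
    by (intro infsum_cong_neutral) (auto simp: indicator_def)
  finally show ?thesis .
qed

end

section \<open>Generalised inverses of a monotone function\<close>

definition lower_inverse :: "real \<Rightarrow> real \<Rightarrow> (real \<Rightarrow> real) \<Rightarrow> real \<Rightarrow> real" where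
  "lower_inverse a b M y = Inf {x \<in> {a..b}. y \<le> M x}"

definition upper_inverse :: "real \<Rightarrow> real \<Rightarrow> (real \<Rightarrow> real) \<Rightarrow> real \<Rightarrow> real" where
  "upper_inverse a b M y = Sup {x \<in> {a..b}. M x \<le> y}"

definition flat_levels :: "real \<Rightarrow> real \<Rightarrow> (real \<Rightarrow> real) \<Rightarrow> real set" where
  "flat_levels a b M = {y \<in> {M a..M b}. \<exists>x1\<in>{a..b}. \<exists>x2\<in>{a..b}. x1 \<noteq> x2 \<and> M x1 = y \<and> M x2 = y}"

lemma mono_on_less_imp_less:
  fixes f :: "'a::linorder \<Rightarrow> 'b::linorder"
  assumes "mono_on A f" "x \<in> A" "y \<in> A" "f x < f y"
  shows "x < y"
  using assms mono_onD[OF assms(1) assms(3) assms(2)] by (cases "y \<le> x") auto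

context
  fixes a b :: real and M :: "real \<Rightarrow> real"
  assumes ab: "a < b" and M_mono: "mono_on {a..b} M"
begin

lemma lower_inverse_in:
  assumes y: "y \<in> {M a..M b}" shows "lower_inverse a b M y \<in> {a..b}"
proof -
  have ne: "b \<in> {x \<in> {a..b}. y \<le> M x}" using y ab by auto
  have bb: "bdd_below {x \<in> {a..b}. y \<le> M x}" by (auto intro!: bdd_belowI[of _ a])
  show ?thesis unfolding lower_inverse_def using ne bb
    by (auto intro!: cInf_lower cInf_greatest)
qed

lemma upper_inverse_in:
  assumes y: "y \<in> {M a..M b}" shows "upper_inverse a b M y \<in> {a..b}"
proof -
  have ne: "a \<in> {x \<in> {a..b}. M x \<le> y}" using y ab by auto
  have bb: "bdd_above {x \<in> {a..b}. M x \<le> y}" by (auto intro!: bdd_aboveI[of _ b])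
  show ?thesis unfolding upper_inverse_def using ne bb
    by (auto intro!: cSup_upper cSup_least)
qed

lemma mono_on_lower_inverse: "mono_on {M a..M b} (lower_inverse a b M)"
proof (rule mono_onI)
  fix y y' assume y: "y \<in> {M a..M b}" "y' \<in> {M a..M b}" "y \<le> y'"
  have ne: "b \<in> {x \<in> {a..b}. y' \<le> M x}" using y ab by auto
  show "lower_inverse a b M y \<le> lower_inverse a b M y'" unfolding lower_inverse_def
    using ne y by (intro cInf_superset_mono) (auto intro!: bdd_belowI[of _ a])
qed

lemma lower_inverse_le_iff:
  assumes s: "s \<in> {a..b}" and y: "y \<in> {M a..M b}"
  shows "lower_inverse a b M y \<le> s \<longleftrightarrow> y \<le> right_lim b M s"
proof (cases "s = b")
  case True
  then show ?thesis using lower_inverse_in[OF y] y by (simp add: right_lim_def)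
next
  case False
  then have sb: "s < b" "a \<le> s" using s by auto
  let ?T = "{x \<in> {a..b}. y \<le> M x}"
  have bbT: "bdd_below ?T" by (auto intro!: bdd_belowI[of _ a])
  have m: "right_lim b M s = Inf (M ` {s<..b})" using right_lim_tendsto(2)[OF M_mono sb(2) sb(1)] .
  have bbM: "bdd_below (M ` {s<..b})" using mono_onD[OF M_mono, of s] sb by (auto intro!: bdd_belowI[of _ "M s"])
  show ?thesis
  proof
    assume X: "lower_inverse a b M y \<le> s"
    show "y \<le> right_lim b M s"
    proof (rule ccontr)
      assume "\<not> y \<le> right_lim b M s"
      then have "Inf (M ` {s<..b}) < y" using m by simp
      then obtain x0 where x0: "x0 \<in> {s<..b}" "M x0 < y" using cInf_lessD[of "M ` {s<..b}" y] sb by auto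
      have "x0 \<le> lower_inverse a b M y" unfolding lower_inverse_def
      proof (rule cInf_greatest)
        show "?T \<noteq> {}" using y ab by auto
        fix x assume x: "x \<in> ?T"
        then have "M x0 < M x" using x0 by auto
        then show "x0 \<le> x" using mono_on_less_imp_less[OF M_mono, of x0 x] x x0 sb by auto
      qed
      then show False using X x0 by simp
    qed
  next
    assume ym: "y \<le> right_lim b M s"
    have le: "lower_inverse a b M y \<le> x" if x: "x \<in> {s<..b}" for x
    proof -
      have "Inf (M ` {s<..b}) \<le> M x" using x bbM by (intro cInf_lower) auto
      then have "x \<in> ?T" using x ym m sb by auto
      then show ?thesis unfolding lower_inverse_def using bbT by (rule cInf_lower)
    qed
    show "lower_inverse a b M y \<le> s"
    proof (rule ccontr)
      assume "\<not> lower_inverse a b M y \<le> s"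
      then have gt: "s < lower_inverse a b M y" by simp
      let ?x = "min b ((s + lower_inverse a b M y) / 2)"
      have "?x \<in> {s<..b}" using gt sb by auto
      from le[OF this] show False using gt sb by (auto simp: min_def split: if_splits)
    qed
  qed
qed

lemma upper_inverse_le_iff:
  assumes s: "s \<in> {a..b}" and y: "y \<in> {M a..M b}"
  shows "upper_inverse a b M y \<le> s \<longleftrightarrow> (\<forall>x\<in>{s<..b}. y < M x)"
proof -
  let ?U = "{x \<in> {a..b}. M x \<le> y}"
  have bbU: "bdd_above ?U" by (auto intro!: bdd_aboveI[of _ b])
  have neU: "?U \<noteq> {}" using y ab by (auto intro!: exI[of _ a])
  show ?thesis
  proof
    assume le: "upper_inverse a b M y \<le> s"
    show "\<forall>x\<in>{s<..b}. y < M x"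
    proof (intro ballI)
      fix x assume x: "x \<in> {s<..b}"
      show "y < M x"
      proof (rule ccontr)
        assume "\<not> y < M x"
        then have "x \<le> upper_inverse a b M y"
          unfolding upper_inverse_def using x s bbU by (intro cSup_upper) auto
        then show False using le x by simp
      qed
    qed
  next
    assume above: "\<forall>x\<in>{s<..b}. y < M x"
    show "upper_inverse a b M y \<le> s" unfolding upper_inverse_def
    proof (rule cSup_least[OF neU])
      fix x assume "x \<in> ?U"
      then show "x \<le> s" using above by force
    qed
  qed
qed

lemma in_flat_levels_if_inverses_differ:
  assumes y: "y \<in> {M a..M b}" and ne: "lower_inverse a b M y \<noteq> upper_inverse a b M y"
  shows "y \<in> flat_levels a b M"
proof -
  let ?T = "{x \<in> {a..b}. y \<le> M x}" and ?U = "{x \<in> {a..b}. M x \<le> y}"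
  have bbT: "bdd_below ?T" by (auto intro!: bdd_belowI[of _ a])
  have bbU: "bdd_above ?U" by (auto intro!: bdd_aboveI[of _ b])
  have "b \<in> ?T" "a \<in> ?U" using y ab by auto
  then have neT: "?T \<noteq> {}" and neU: "?U \<noteq> {}" by auto
  have Xr: "lower_inverse a b M y \<in> {a..b}" and Xir: "upper_inverse a b M y \<in> {a..b}" using lower_inverse_in[OF y] upper_inverse_in[OF y] .
  show ?thesis
  proof (cases "lower_inverse a b M y < upper_inverse a b M y")
    case True
    define x1 where "x1 = (2 * lower_inverse a b M y + upper_inverse a b M y) / 3"
    define x2 where "x2 = (lower_inverse a b M y + 2 * upper_inverse a b M y) / 3"
    have x12: "lower_inverse a b M y < x1" "x1 < x2" "x2 < upper_inverse a b M y" using True by (auto simp: x1_def x2_def)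
    have inab: "x1 \<in> {a..b}" "x2 \<in> {a..b}" using x12 Xr Xir by auto
    obtain xt where xt: "xt \<in> ?T" "xt < x1" using cInf_lessD[OF neT, of x1] x12 by (auto simp: lower_inverse_def)
    obtain xu where xu: "xu \<in> ?U" "x2 < xu" using less_cSupD[OF neU, of x2] x12 by (auto simp: upper_inverse_def)
    have "y \<le> M x1" using xt mono_onD[OF M_mono, of xt x1] inab by auto
    moreover have "M x1 \<le> M x2" using mono_onD[OF M_mono, of x1 x2] inab x12 by auto
    moreover have "M x2 \<le> y" using xu mono_onD[OF M_mono, of x2 xu] inab by auto
    ultimately have "M x1 = y" "M x2 = y" by auto
    then show ?thesis unfolding flat_levels_def using inab x12 y by (intro CollectI conjI bexI[of _ x1] bexI[of _ x2]) auto
  next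
    case False
    then have lt: "upper_inverse a b M y < lower_inverse a b M y" using ne by simp
    define x where "x = (lower_inverse a b M y + upper_inverse a b M y) / 2"
    have x: "upper_inverse a b M y < x" "x < lower_inverse a b M y" using lt by (auto simp: x_def)
    have xab: "x \<in> {a..b}" using x Xr Xir by auto
    have "x \<notin> ?T"
    proof
      assume "x \<in> ?T"
      then have "lower_inverse a b M y \<le> x" unfolding lower_inverse_def using bbT by (rule cInf_lower)
      then show False using x by simp
    qed
    moreover have "x \<notin> ?U"
    proof
      assume "x \<in> ?U"
      then have "x \<le> upper_inverse a b M y" unfolding upper_inverse_def using bbU by (rule cSup_upper)
      then show False using x by simp
    qed
    ultimately show ?thesis using xab by auto
  qed
qed

lemma lower_inverse_less_upper_inverse:
  assumes y: "y \<in> flat_levels a b M" shows "lower_inverse a b M y < upper_inverse a b M y"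
proof -
  obtain x1 x2 where x: "x1 \<in> {a..b}" "x2 \<in> {a..b}" "x1 \<noteq> x2" "M x1 = y" "M x2 = y" and yr: "y \<in> {M a..M b}"
    using y unfolding flat_levels_def by auto
  have bbT: "bdd_below {x \<in> {a..b}. y \<le> M x}" by (auto intro!: bdd_belowI[of _ a])
  have bbU: "bdd_above {x \<in> {a..b}. M x \<le> y}" by (auto intro!: bdd_aboveI[of _ b])
  have "lower_inverse a b M y \<le> min x1 x2" unfolding lower_inverse_def using x bbT by (auto intro!: cInf_lower simp: min_def)
  moreover have "max x1 x2 \<le> upper_inverse a b M y" unfolding upper_inverse_def using x bbU by (auto intro!: cSup_upper simp: max_def)
  ultimately show ?thesis using x(3) by (auto simp: min_def max_def split: if_splits)
qed

lemma upper_inverse_le_lower_inverse: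
  assumes y: "y \<in> flat_levels a b M" "y' \<in> flat_levels a b M" "y < y'"
  shows "upper_inverse a b M y \<le> lower_inverse a b M y'"
proof -
  have yr: "y \<in> {M a..M b}" "y' \<in> {M a..M b}" using y unfolding flat_levels_def by auto
  have "b \<in> {x \<in> {a..b}. y' \<le> M x}" "a \<in> {x \<in> {a..b}. M x \<le> y}" using yr ab by auto
  then have neT: "{x \<in> {a..b}. y' \<le> M x} \<noteq> {}" and neU: "{x \<in> {a..b}. M x \<le> y} \<noteq> {}" by auto
  show ?thesis unfolding upper_inverse_def lower_inverse_def
  proof (rule cSup_least[OF neU])
    fix x assume x: "x \<in> {x \<in> {a..b}. M x \<le> y}"
    show "x \<le> Inf {x \<in> {a..b}. y' \<le> M x}"
    proof (rule cInf_greatest[OF neT])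
      fix x' assume x': "x' \<in> {x \<in> {a..b}. y' \<le> M x}"
      then have "M x < M x'" using x y by auto
      then show "x \<le> x'" using mono_on_less_imp_less[OF M_mono, of x x'] x x' by auto
    qed
  qed
qed

lemma countable_flat_levels: "countable (flat_levels a b M)"
proof -
  have "\<exists>q\<in>\<rat>. lower_inverse a b M y < q \<and> q < upper_inverse a b M y" if "y \<in> flat_levels a b M" for y
    using Rats_dense_in_real[OF lower_inverse_less_upper_inverse[OF that]] by auto
  then obtain q where q: "\<And>y. y \<in> flat_levels a b M \<Longrightarrow> q y \<in> \<rat> \<and> lower_inverse a b M y < q y \<and> q y < upper_inverse a b M y"
    by metis
  have inj: "inj_on q (flat_levels a b M)"
  proof (rule inj_onI)
    fix y y' assume yy: "y \<in> flat_levels a b M" "y' \<in> flat_levels a b M" "q y = q y'"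
    show "y = y'"
    proof (rule ccontr)
      assume "y \<noteq> y'"
      then consider "y < y'" | "y' < y" by linarith
      then show False
      proof cases
        case 1
        have "q y < q y'" using q[OF yy(1)] q[OF yy(2)] upper_inverse_le_lower_inverse[OF yy(1,2) 1] by linarith
        then show False using yy by simp
      next
        case 2
        have "q y' < q y" using q[OF yy(1)] q[OF yy(2)] upper_inverse_le_lower_inverse[OF yy(2,1) 2] by linarith
        then show False using yy by simp
      qed
    qed
  qed
  have "q ` flat_levels a b M \<subseteq> \<rat>" using q by auto
  then have "countable (q ` flat_levels a b M)" using countable_rat countable_subset by blast
  then show ?thesis using inj countable_image_inj_on by blast
qed

lemma mono_on_upper_inverse: "mono_on {M a..M b} (upper_inverse a b M)"
proof (rule mono_onI)
  fix y y' assume y: "y \<in> {M a..M b}" "y' \<in> {M a..M b}" "y \<le> y'"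
  have "a \<in> {x \<in> {a..b}. M x \<le> y}" using y ab by auto
  then show "upper_inverse a b M y \<le> upper_inverse a b M y'" unfolding upper_inverse_def
    using y by (intro cSup_subset_mono) (auto intro!: bdd_aboveI[of _ b])
qed

lemma right_lim_in_range: "s \<in> {a..b} \<Longrightarrow> right_lim b M s \<in> {M a..M b}"
  using mono_onD[OF M_mono, of a s] right_lim_bounds(1,3)[OF M_mono, of s] by auto

lemma eq_right_lim_if_flat:
  assumes s: "s \<in> {a..b}" and x1: "x1 \<in> {s<..b}" "M x1 = right_lim b M s" and x: "x \<in> {s<..x1}"
  shows "M x = right_lim b M s"
proof -
  have "right_lim b M s \<le> M x" using right_lim_bounds(2)[OF M_mono, of s x] s x x1 by auto
  moreover have "M x \<le> M x1" using mono_onD[OF M_mono, of x x1] x x1 s by auto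
  ultimately show ?thesis using x1 by simp
qed

lemma right_lim_in_flat_levels:
  assumes s: "s \<in> {a..b}" and x1: "x1 \<in> {s<..b}" "M x1 = right_lim b M s"
  shows "right_lim b M s \<in> flat_levels a b M"
proof -
  let ?x = "(s + x1) / 2"
  have "M ?x = right_lim b M s" using x1 by (intro eq_right_lim_if_flat[OF s x1]) auto
  moreover have "?x \<in> {a..b}" "x1 \<in> {a..b}" "?x \<noteq> x1" using x1 s by auto
  ultimately show ?thesis unfolding flat_levels_def using right_lim_in_range[OF s] x1 by blast
qed

lemma lower_inverse_vimage_Icc:
  assumes s: "s \<in> {a..b}"
  shows "{y \<in> {M a..M b}. lower_inverse a b M y \<in> {a..s}} = {M a..right_lim b M s}"
  using lower_inverse_le_iff[OF s] lower_inverse_in right_lim_in_range[OF s] by fastforce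

lemma upper_inverse_vimage_Icc:
  assumes s: "s \<in> {a..b}"
  shows "{y \<in> {M a..M b}. upper_inverse a b M y \<in> {a..s}} =
    (if \<exists>x\<in>{s<..b}. M x = right_lim b M s then {M a..<right_lim b M s} else {M a..right_lim b M s})"
proof -
  let ?m = "right_lim b M s"
  have m: "?m \<in> {M a..M b}" by (rule right_lim_in_range[OF s])
  have ge: "?m \<le> M x" if "x \<in> {s<..b}" for x using right_lim_bounds(2)[OF M_mono, of s x] s that by auto
  have iff: "y \<in> {M a..M b} \<and> upper_inverse a b M y \<in> {a..s} \<longleftrightarrow> y \<in> {M a..M b} \<and> (\<forall>x\<in>{s<..b}. y < M x)" for y
  proof (cases "y \<in> {M a..M b}")
    case True
    then show ?thesis using upper_inverse_le_iff[OF s True] upper_inverse_in[OF True] by auto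
  qed auto
  have below: "y \<le> ?m" if "\<forall>x\<in>{s<..b}. y < M x" "y \<in> {M a..M b}" for y
  proof (cases "s = b")
    case False
    then have sb: "a \<le> s" "s < b" using s by auto
    show ?thesis
    proof (rule ccontr)
      assume "\<not> y \<le> ?m"
      then have "Inf (M ` {s<..b}) < y" using right_lim_tendsto(2)[OF M_mono sb] by simp
      then obtain x where "x \<in> {s<..b}" "M x < y" using cInf_lessD[of "M ` {s<..b}" y] sb by auto
      then show False using that(1) by fastforce
    qed
  qed (use that in \<open>simp add: right_lim_def\<close>)
  have "{y \<in> {M a..M b}. upper_inverse a b M y \<in> {a..s}} = {y. y \<in> {M a..M b} \<and> (\<forall>x\<in>{s<..b}. y < M x)}"
    by (simp only: iff)
  also have "\<dots> = (if \<exists>x\<in>{s<..b}. M x = ?m then {M a..<?m} else {M a..?m})"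
  proof (cases "\<exists>x\<in>{s<..b}. M x = ?m")
    case True
    then obtain x1 where "x1 \<in> {s<..b}" "M x1 = ?m" by blast
    then have "(\<forall>x\<in>{s<..b}. y < M x) \<longleftrightarrow> y < ?m" for y using ge by fastforce
    then show ?thesis using True m by auto
  next
    case False
    have "(\<forall>x\<in>{s<..b}. y < M x) \<longleftrightarrow> y \<le> ?m" if y: "y \<in> {M a..M b}" for y
    proof
      assume "y \<le> ?m"
      show "\<forall>x\<in>{s<..b}. y < M x"
      proof
        fix x assume x: "x \<in> {s<..b}"
        have "?m < M x" using ge[OF x] False x by force
        then show "y < M x" using \<open>y \<le> ?m\<close> by simp
      qed
    qed (use below y in blast)
    then have "{y. y \<in> {M a..M b} \<and> (\<forall>x\<in>{s<..b}. y < M x)} = {y. y \<in> {M a..M b} \<and> y \<le> ?m}" by blast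
    then show ?thesis using False m by auto
  qed
  finally show ?thesis .
qed

end

lemma infsum_mult_indicator:
  fixes f :: "'a \<Rightarrow> real"
  shows "infsum (\<lambda>y. f y * indicator S y) H = infsum f (H \<inter> S)"
  by (intro infsum_cong_neutral) (auto simp: indicator_def)

lemma summable_on_mult_indicator:
  fixes f :: "'a \<Rightarrow> real"
  assumes "f summable_on H"
  shows "(\<lambda>y. f y * indicator S y) summable_on H"
proof -
  have "f summable_on (H \<inter> S)" using assms by (rule summable_on_subset_banach) auto
  then show ?thesis by (rule summable_on_cong_neutral[THEN iffD1, rotated -1]) (auto simp: indicator_def)
qed

lemma infsum_Int_greaterThanAtMost_tendsto_0:
  fixes f :: "real \<Rightarrow> real"
  assumes f0: "\<And>y. y \<in> H \<Longrightarrow> 0 \<le> f y" and fs: "f summable_on H"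
  shows "((\<lambda>t. infsum f (H \<inter> {m<..t})) \<longlongrightarrow> 0) (at_right m)"
proof (rule order_tendstoI)
  fix a :: real assume "a < 0"
  have "0 \<le> infsum f (H \<inter> {m<..t})" for t using f0 by (intro infsum_nonneg) auto
  then show "eventually (\<lambda>t. a < infsum f (H \<inter> {m<..t})) (at_right m)" using \<open>a < 0\<close>
    by (intro always_eventually allI) (meson less_le_trans)
next
  fix a :: real assume a: "0 < a"
  obtain F where F: "finite F" "F \<subseteq> H" "dist (sum f F) (infsum f H) \<le> a / 2"
    using infsum_finite_approximation[OF fs, of "a/2"] a by auto
  have sHF: "f summable_on (H - F)" using fs by (rule summable_on_subset_banach) auto
  have split: "infsum f H = infsum f (H - F) + sum f F"
  proof -
    have "infsum f H = infsum f ((H - F) \<union> F)" using F by (simp add: Un_absorb2)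
    also have "\<dots> = infsum f (H - F) + infsum f F"
      using sHF F by (intro infsum_Un_disjoint) auto
    finally show ?thesis using F by simp
  qed
  have rest: "infsum f (H - F) \<le> a / 2" using split F(3) by (simp add: dist_real_def)
  have ev: "eventually (\<lambda>t. \<forall>y\<in>F. \<not> (m < y \<and> y \<le> t)) (at_right m)"
  proof (rule eventually_ball_finite[OF F(1)], intro ballI)
    fix y assume "y \<in> F"
    show "eventually (\<lambda>t. \<not> (m < y \<and> y \<le> t)) (at_right m)"
    proof (cases "m < y")
      case True
      show ?thesis using eventually_at_right_real[OF True] by (rule eventually_mono) auto
    qed simp
  qed
  then show "eventually (\<lambda>t. infsum f (H \<inter> {m<..t}) < a) (at_right m)"
  proof (rule eventually_mono)
    fix t assume t: "\<forall>y\<in>F. \<not> (m < y \<and> y \<le> t)"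
    have "infsum f (H \<inter> {m<..t}) \<le> infsum f (H - F)"
    proof (rule infsum_mono2)
      show "f summable_on (H \<inter> {m<..t})" using fs by (rule summable_on_subset_banach) auto
      show "H \<inter> {m<..t} \<subseteq> H - F" using t by auto
    qed (use sHF f0 in auto)
    then show "infsum f (H \<inter> {m<..t}) < a" using rest a by simp
  qed
qed

lemma infsum_Int_Un:
  fixes f :: "real \<Rightarrow> real"
  assumes "f summable_on H" "A \<inter> B = {}"
  shows "infsum f (H \<inter> (A \<union> B)) = infsum f (H \<inter> A) + infsum f (H \<inter> B)"
proof -
  have "H \<inter> (A \<union> B) = (H \<inter> A) \<union> (H \<inter> B)" by auto
  moreover have "f summable_on (H \<inter> A)" "f summable_on (H \<inter> B)"
    using assms(1) by (auto intro: summable_on_subset_banach)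
  ultimately show ?thesis using assms(2) by (simp add: infsum_Un_disjoint disjoint_iff)
qed

section \<open>Jumps of a monotone function\<close>

abbreviation left_jump :: "real \<Rightarrow> (real \<Rightarrow> real) \<Rightarrow> real \<Rightarrow> real" where
  "left_jump c N y \<equiv> N y - left_lim c N y"

abbreviation right_jump :: "real \<Rightarrow> (real \<Rightarrow> real) \<Rightarrow> real \<Rightarrow> real" where
  "right_jump d N y \<equiv> right_lim d N y - N y"

text \<open>The part of the jump of \<open>N\<close> at \<open>y\<close> that is seen by the increment \<open>N t - N s\<close>.\<close>

definition jumps_between :: "real \<Rightarrow> real \<Rightarrow> (real \<Rightarrow> real) \<Rightarrow> real \<Rightarrow> real \<Rightarrow> real \<Rightarrow> real" where
  "jumps_between c d N s t y = left_jump c N y * indicator {s<..t} y + right_jump d N y * indicator {s..<t} y"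

definition strip_jumps :: "real \<Rightarrow> real \<Rightarrow> (real \<Rightarrow> real) \<Rightarrow> real set \<Rightarrow> real \<Rightarrow> real" where
  "strip_jumps c d N H t =
    N t - (\<Sum>\<^sub>\<infinity>y\<in>H. left_jump c N y * indicator {y..d} t + right_jump d N y * indicator {y<..d} t)"

context
  fixes c d :: real and N :: "real \<Rightarrow> real"
  assumes cd: "c \<le> d" and N_mono: "mono_on {c..d} N"
begin

lemma left_jump_nonneg: "y \<in> {c..d} \<Longrightarrow> 0 \<le> left_jump c N y"
  using left_lim_bounds(1)[OF N_mono] by auto

lemma right_jump_nonneg: "y \<in> {c..d} \<Longrightarrow> 0 \<le> right_jump d N y"
  using right_lim_bounds(1)[OF N_mono] by auto

lemma jumps_between_nonneg: "y \<in> {c..d} \<Longrightarrow> 0 \<le> jumps_between c d N s t y"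
  unfolding jumps_between_def using left_jump_nonneg[of y] right_jump_nonneg[of y] by (auto simp: indicator_def)

lemma sum_jumps_between_le:
  assumes F: "finite F" "F \<subseteq> {c..d}" and s: "c \<le> s"
  shows "\<forall>t. s \<le> t \<longrightarrow> t \<le> d \<longrightarrow> (\<Sum>y\<in>F. jumps_between c d N s t y) \<le> N t - N s"
  using F
proof (induction F rule: finite_linorder_max_induct)
  case empty
  show ?case using mono_onD[OF N_mono, of s] s by auto
next
  case (insert z F)
  have zr: "z \<in> {c..d}" and Fr: "F \<subseteq> {c..d}" using insert by auto
  have IH: "\<And>t. s \<le> t \<Longrightarrow> t \<le> d \<Longrightarrow> (\<Sum>y\<in>F. jumps_between c d N s t y) \<le> N t - N s" using insert Fr by auto
  have zF: "z \<notin> F" using insert by auto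
  show ?case
  proof (intro allI impI)
    fix t assume t: "s \<le> t" "t \<le> d"
    have sum_ins: "(\<Sum>y\<in>insert z F. jumps_between c d N s t y) = jumps_between c d N s t z + (\<Sum>y\<in>F. jumps_between c d N s t y)"
      using insert zF by simp
    show "(\<Sum>y\<in>insert z F. jumps_between c d N s t y) \<le> N t - N s"
    proof (cases "s \<le> z \<and> z \<le> t")
      case False
      then have "jumps_between c d N s t z = 0" unfolding jumps_between_def by (auto simp: indicator_def)
      then show ?thesis using sum_ins IH[OF t] by simp
    next
      case True
      then have sz: "s \<le> z" "z \<le> t" by auto
      have SF: "(\<Sum>y\<in>F. jumps_between c d N s t y) \<le> (if s < z then left_lim c N z - N s else 0)"
      proof (cases "s < z")
        case False
        then have "s = z" using sz by simp
        then have "jumps_between c d N s t y = 0" if "y \<in> F" for y using insert that unfolding jumps_between_def by (auto simp: indicator_def)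
        then show ?thesis using False by simp
      next
        case True
        obtain u where u: "s \<le> u" "u < z" "\<And>y. y \<in> F \<Longrightarrow> y \<le> u"
        proof (cases "F = {}")
          case True then show ?thesis using that[of s] \<open>s < z\<close> by auto
        next
          case False
          have "Max F \<in> F" using insert False by auto
          then have "Max F < z" using insert by auto
          moreover have "\<And>y. y \<in> F \<Longrightarrow> y \<le> Max F" using insert by auto
          ultimately show ?thesis using that[of "max s (Max F)"] \<open>s < z\<close> by force
        qed
        define t' where "t' = (u + z) / 2"
        have t': "s \<le> t'" "t' < z" "u < t'" using u by (auto simp: t'_def)
        have "(\<Sum>y\<in>F. jumps_between c d N s t y) = (\<Sum>y\<in>F. jumps_between c d N s t' y)"
        proof (intro sum.cong refl)
          fix y assume y: "y \<in> F"
          have "y < z" "y < t'" using insert y u(3)[OF y] t' by auto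
          then show "jumps_between c d N s t y = jumps_between c d N s t' y" unfolding jumps_between_def using sz by (auto simp: indicator_def)
        qed
        also have "\<dots> \<le> N t' - N s" using IH[of t'] t' zr sz t by auto
        also have "N t' \<le> left_lim c N z" using left_lim_bounds(2)[OF N_mono, of z t'] t' zr s by auto
        finally show ?thesis using True by simp
      qed
      have pz: "jumps_between c d N s t z \<le> (if s < z then N z - left_lim c N z else 0) + (if z < t then N t - N z else 0)"
      proof -
        have "right_lim d N z \<le> N t" if "z < t" using right_lim_bounds(2)[OF N_mono, of z t] zr that t by auto
        then show ?thesis unfolding jumps_between_def using sz by (auto simp: indicator_def)
      qed
      have "N s \<le> N z" "N z \<le> N t" using mono_onD[OF N_mono, of s z] mono_onD[OF N_mono, of z t] sz s t zr by auto
      then show ?thesis using sum_ins SF pz sz by (auto split: if_splits)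
    qed
  qed
qed

lemma summable_jumps_between:
  assumes H: "H \<subseteq> {c..d}" and s: "c \<le> s" "s \<le> t" "t \<le> d"
  shows "(jumps_between c d N s t) summable_on H" and "infsum (jumps_between c d N s t) H \<le> N t - N s"
proof -
  have fin: "\<And>F. finite F \<Longrightarrow> F \<subseteq> H \<Longrightarrow> sum (jumps_between c d N s t) F \<le> N t - N s"
    using sum_jumps_between_le s H by blast
  show sm: "(jumps_between c d N s t) summable_on H"
    using H fin jumps_between_nonneg by (intro nonneg_bdd_above_summable_on) (auto simp: bdd_above_def)
  show "infsum (jumps_between c d N s t) H \<le> N t - N s" by (rule infsum_le_finite_sums[OF sm fin])
qed

lemma summable_left_jump:
  assumes H: "H \<subseteq> {c..d}" shows "(\<lambda>y. left_jump c N y) summable_on H"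
proof (rule nonneg_bdd_above_summable_on)
  show "\<And>x. x \<in> H \<Longrightarrow> 0 \<le> left_jump c N x" using H left_jump_nonneg by auto
  have "sum (\<lambda>y. left_jump c N y) F \<le> N d - N c" if "finite F" "F \<subseteq> H" for F
  proof -
    have "sum (\<lambda>y. left_jump c N y) F \<le> sum (jumps_between c d N c d) F"
    proof (rule sum_mono)
      fix y assume "y \<in> F"
      then have y: "y \<in> {c..d}" using that H by auto
      show "left_jump c N y \<le> jumps_between c d N c d y"
        using right_jump_nonneg[OF y] y unfolding jumps_between_def by (cases "y = c") (auto simp: indicator_def left_lim_def)
    qed
    also have "\<dots> \<le> N d - N c" using sum_jumps_between_le[of F c] that H cd by auto
    finally show ?thesis .
  qed
  then show "bdd_above (sum (\<lambda>y. left_jump c N y) ` {F. F \<subseteq> H \<and> finite F})"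
    by (auto simp: bdd_above_def)
qed

lemma summable_right_jump:
  assumes H: "H \<subseteq> {c..d}" shows "(\<lambda>y. right_jump d N y) summable_on H"
proof (rule nonneg_bdd_above_summable_on)
  show "\<And>x. x \<in> H \<Longrightarrow> 0 \<le> right_jump d N x" using H right_jump_nonneg by auto
  have "sum (\<lambda>y. right_jump d N y) F \<le> N d - N c" if "finite F" "F \<subseteq> H" for F
  proof -
    have "sum (\<lambda>y. right_jump d N y) F \<le> sum (jumps_between c d N c d) F"
    proof (rule sum_mono)
      fix y assume "y \<in> F"
      then have y: "y \<in> {c..d}" using that H by auto
      show "right_jump d N y \<le> jumps_between c d N c d y"
        using left_jump_nonneg[OF y] y unfolding jumps_between_def by (cases "y = d") (auto simp: indicator_def right_lim_def)
    qed
    also have "\<dots> \<le> N d - N c" using sum_jumps_between_le[of F c] that H cd by auto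
    finally show ?thesis .
  qed
  then show "bdd_above (sum (\<lambda>y. right_jump d N y) ` {F. F \<subseteq> H \<and> finite F})"
    by (auto simp: bdd_above_def)
qed

end

context
  fixes c d :: real and N :: "real \<Rightarrow> real" and H :: "real set"
  assumes cd: "c \<le> d" and N_mono: "mono_on {c..d} N" and Hr: "H \<subseteq> {c..d}"
begin

lemma strip_jumps_eq:
  assumes t: "t \<in> {c..d}"
  shows "strip_jumps c d N H t = N t - infsum (left_jump c N) (H \<inter> {c..t}) - infsum (right_jump d N) (H \<inter> {c..<t})"
proof -
  have eqm: "(\<lambda>y. left_jump c N y * indicator {y..d} t) = (\<lambda>y. left_jump c N y * indicator {..t} y)"
    using t by (auto simp: indicator_def)
  have eqp: "(\<lambda>y. right_jump d N y * indicator {y<..d} t) = (\<lambda>y. right_jump d N y * indicator {..<t} y)"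
    using t by (auto simp: indicator_def)
  have eqs: "(\<lambda>y. left_jump c N y * indicator {y..d} t + right_jump d N y * indicator {y<..d} t) = (\<lambda>y. left_jump c N y * indicator {..t} y + right_jump d N y * indicator {..<t} y)"
    using t by (auto simp: indicator_def)
  have "infsum (\<lambda>y. left_jump c N y * indicator {y..d} t + right_jump d N y * indicator {y<..d} t) H
      = infsum (\<lambda>y. left_jump c N y * indicator {y..d} t) H + infsum (\<lambda>y. right_jump d N y * indicator {y<..d} t) H"
    unfolding eqm eqp eqs
    by (intro infsum_add summable_on_mult_indicator summable_left_jump[OF cd N_mono Hr] summable_right_jump[OF cd N_mono Hr])
  also have "infsum (\<lambda>y. left_jump c N y * indicator {y..d} t) H = infsum (left_jump c N) (H \<inter> {c..t})"
    unfolding eqm infsum_mult_indicator using Hr by (intro arg_cong[where f="infsum (left_jump c N)"]) auto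
  also have "infsum (\<lambda>y. right_jump d N y * indicator {y<..d} t) H = infsum (right_jump d N) (H \<inter> {c..<t})"
    unfolding eqp infsum_mult_indicator using Hr by (intro arg_cong[where f="infsum (right_jump d N)"]) auto
  finally show ?thesis unfolding strip_jumps_def by simp
qed

lemma mono_on_strip_jumps: "mono_on {c..d} (strip_jumps c d N H)"
proof (rule mono_onI)
  fix s t assume st: "s \<in> {c..d}" "t \<in> {c..d}" "s \<le> t"
  have m: "infsum (left_jump c N) (H \<inter> {c..t}) = infsum (left_jump c N) (H \<inter> {c..s}) + infsum (left_jump c N) (H \<inter> {s<..t})"
  proof -
    have "{c..t} = {c..s} \<union> {s<..t}" using st by auto
    moreover have "{c..s} \<inter> {s<..t} = {}" by auto
    ultimately show ?thesis using infsum_Int_Un[OF summable_left_jump[OF cd N_mono Hr], of "{c..s}" "{s<..t}"] by simp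
  qed
  have p: "infsum (right_jump d N) (H \<inter> {c..<t}) = infsum (right_jump d N) (H \<inter> {c..<s}) + infsum (right_jump d N) (H \<inter> {s..<t})"
  proof -
    have "{c..<t} = {c..<s} \<union> {s..<t}" using st by auto
    moreover have "{c..<s} \<inter> {s..<t} = {}" by auto
    ultimately show ?thesis using infsum_Int_Un[OF summable_right_jump[OF cd N_mono Hr], of "{c..<s}" "{s..<t}"] by simp
  qed
  have "infsum (left_jump c N) (H \<inter> {s<..t}) + infsum (right_jump d N) (H \<inter> {s..<t}) = infsum (jumps_between c d N s t) H"
  proof -
    have "infsum (jumps_between c d N s t) H = infsum (\<lambda>y. left_jump c N y * indicator {s<..t} y) H + infsum (\<lambda>y. right_jump d N y * indicator {s..<t} y) H"
    proof -
      have "jumps_between c d N s t = (\<lambda>y. left_jump c N y * indicator {s<..t} y + right_jump d N y * indicator {s..<t} y)"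
        by (rule ext) (simp add: jumps_between_def)
      then show ?thesis by (simp only:) (intro infsum_add summable_on_mult_indicator summable_left_jump[OF cd N_mono Hr] summable_right_jump[OF cd N_mono Hr])
    qed
    then show ?thesis by (simp add: infsum_mult_indicator)
  qed
  also have "\<dots> \<le> N t - N s" using summable_jumps_between(2)[OF cd N_mono Hr, of s t] st by auto
  finally show "strip_jumps c d N H s \<le> strip_jumps c d N H t" using strip_jumps_eq[OF st(1)] strip_jumps_eq[OF st(2)] m p by simp
qed

lemma right_lim_strip_jumps:
  assumes m: "m \<in> {c..d}"
  shows "right_lim d (strip_jumps c d N H) m = right_lim d N m - infsum (left_jump c N) (H \<inter> {c..m}) - infsum (right_jump d N) (H \<inter> {c..m})"
proof (cases "m = d")
  case True
  have "infsum (right_jump d N) (H \<inter> {c..d}) = infsum (right_jump d N) (H \<inter> {c..<d})"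
    by (intro infsum_cong_neutral) (auto simp: right_lim_def)
  then show ?thesis using True strip_jumps_eq[of d] cd by (simp add: right_lim_def)
next
  case False
  then have md: "c \<le> m" "m < d" using m by auto
  let ?L = "right_lim d N m - infsum (left_jump c N) (H \<inter> {c..m}) - infsum (right_jump d N) (H \<inter> {c..m})"
  have T1: "(N \<longlongrightarrow> right_lim d N m) (at_right m)" using right_lim_tendsto(1)[OF N_mono md] .
  have T2: "((\<lambda>t. infsum (left_jump c N) (H \<inter> {c..m}) + infsum (left_jump c N) (H \<inter> {m<..t})) \<longlongrightarrow> infsum (left_jump c N) (H \<inter> {c..m}) + 0) (at_right m)"
    by (intro tendsto_add tendsto_const infsum_Int_greaterThanAtMost_tendsto_0[OF left_jump_nonneg[OF cd N_mono subsetD[OF Hr]] summable_left_jump[OF cd N_mono Hr]])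
  have T3: "((\<lambda>t. infsum (right_jump d N) (H \<inter> {c..m}) + infsum (right_jump d N) (H \<inter> {m<..<t})) \<longlongrightarrow> infsum (right_jump d N) (H \<inter> {c..m}) + 0) (at_right m)"
  proof (intro tendsto_add tendsto_const)
    show "((\<lambda>t. infsum (right_jump d N) (H \<inter> {m<..<t})) \<longlongrightarrow> 0) (at_right m)"
    proof (rule tendsto_sandwich[OF _ _ tendsto_const infsum_Int_greaterThanAtMost_tendsto_0[OF right_jump_nonneg[OF cd N_mono subsetD[OF Hr]] summable_right_jump[OF cd N_mono Hr]]])
      show "eventually (\<lambda>t. 0 \<le> infsum (right_jump d N) (H \<inter> {m<..<t})) (at_right m)"
        using right_jump_nonneg[OF cd N_mono subsetD[OF Hr]] by (intro always_eventually allI infsum_nonneg) auto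
      show "eventually (\<lambda>t. infsum (right_jump d N) (H \<inter> {m<..<t}) \<le> infsum (right_jump d N) (H \<inter> {m<..t})) (at_right m)"
        using right_jump_nonneg[OF cd N_mono subsetD[OF Hr]] by (intro always_eventually allI infsum_mono2 summable_on_subset_banach[OF summable_right_jump[OF cd N_mono Hr]]) auto
    qed
  qed
  have ev: "eventually (\<lambda>t. strip_jumps c d N H t = N t - (infsum (left_jump c N) (H \<inter> {c..m}) + infsum (left_jump c N) (H \<inter> {m<..t}))
        - (infsum (right_jump d N) (H \<inter> {c..m}) + infsum (right_jump d N) (H \<inter> {m<..<t}))) (at_right m)"
    using eventually_at_right_real[OF md(2)]
  proof (rule eventually_mono)
    fix t assume t: "t \<in> {m<..<d}"
    have "{c..t} = {c..m} \<union> {m<..t}" "{c..<t} = {c..m} \<union> {m<..<t}" using t md by auto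
    then have "infsum (left_jump c N) (H \<inter> {c..t}) = infsum (left_jump c N) (H \<inter> {c..m}) + infsum (left_jump c N) (H \<inter> {m<..t})"
      "infsum (right_jump d N) (H \<inter> {c..<t}) = infsum (right_jump d N) (H \<inter> {c..m}) + infsum (right_jump d N) (H \<inter> {m<..<t})"
      using infsum_Int_Un[OF summable_left_jump[OF cd N_mono Hr], of "{c..m}" "{m<..t}"] infsum_Int_Un[OF summable_right_jump[OF cd N_mono Hr], of "{c..m}" "{m<..<t}"] by (auto simp: disjoint_iff)
    then show "strip_jumps c d N H t = N t - (infsum (left_jump c N) (H \<inter> {c..m}) + infsum (left_jump c N) (H \<inter> {m<..t}))
        - (infsum (right_jump d N) (H \<inter> {c..m}) + infsum (right_jump d N) (H \<inter> {m<..<t}))"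
      using strip_jumps_eq[of t] t md by simp
  qed
  have TT: "(strip_jumps c d N H \<longlongrightarrow> ?L) (at_right m)"
    using tendsto_diff[OF tendsto_diff[OF T1 T2] T3] ev by (simp add: tendsto_cong)
  have "right_lim d (strip_jumps c d N H) m = Lim (at_right m) (strip_jumps c d N H)" using False by (simp add: right_lim_def)
  also have "\<dots> = ?L" by (rule tendsto_Lim[OF _ TT]) simp
  finally show ?thesis .
qed

lemma strip_jumps_start: "strip_jumps c d N H c = N c"
proof -
  have "infsum (left_jump c N) (H \<inter> {c..c}) = 0" by (intro infsum_0) (auto simp: left_lim_def)
  then show ?thesis using strip_jumps_eq[of c] cd by simp
qed

lemma measure_LS_strip_jumps_Icc:
  assumes m: "m \<in> {c..d}"
  shows "measure (LS_measure c d (strip_jumps c d N H)) {c..m}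
    = right_lim d N m - infsum (left_jump c N) (H \<inter> {c..m}) - infsum (right_jump d N) (H \<inter> {c..m}) - N c"
  using measure_LS_measure_Icc[OF mono_on_strip_jumps cd m] right_lim_strip_jumps[OF m] strip_jumps_start
  by simp

lemma measure_LS_strip_jumps_singleton_le:
  assumes yH: "y \<in> H" and t: "c \<le> t" "t < y"
  shows "measure (LS_measure c d (strip_jumps c d N H)) {y} \<le> left_lim c N y - N t"
proof -
  let ?\<mu> = "LS_measure c d (strip_jumps c d N H)"
  have fin: "finite_measure ?\<mu>" by (rule finite_measure_LS_measure[OF mono_on_strip_jumps cd])
  have inS: "S \<in> sets ?\<mu>" if "S \<subseteq> {c..d}" "S \<in> sets borel" for S
    using that unfolding sets_LS_measure[OF mono_on_strip_jumps cd] by (subst sets_restrict_space_iff) auto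
  have y: "y \<in> {c..d}" and t_in: "t \<in> {c..d}" using yH Hr t by auto
  have split: "infsum f (H \<inter> {c..y}) - infsum f (H \<inter> {c..t}) = infsum f (H \<inter> {t<..y})"
    if "f summable_on H" for f :: "real \<Rightarrow> real"
  proof -
    have "{c..y} = {c..t} \<union> {t<..y}" "{c..t} \<inter> {t<..y} = {}" using t by auto
    then show ?thesis using infsum_Int_Un[OF that, of "{c..t}" "{t<..y}"] by simp
  qed
  have "measure ?\<mu> {y} \<le> measure ?\<mu> {t<..y}"
    using t y by (intro finite_measure.finite_measure_mono[OF fin] inS) auto
  also have "measure ?\<mu> {t<..y} = measure ?\<mu> {c..y} - measure ?\<mu> {c..t}"
  proof -
    have "{t<..y} = {c..y} - {c..t}" using t by auto
    then show ?thesis using t y by (simp add: finite_measure.finite_measure_Diff[OF fin] inS)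
  qed
  also have "\<dots> = (right_lim d N y - right_lim d N t) - infsum (left_jump c N) (H \<inter> {t<..y})
      - infsum (right_jump d N) (H \<inter> {t<..y})"
    using measure_LS_strip_jumps_Icc[OF y] measure_LS_strip_jumps_Icc[OF t_in]
      split[OF summable_left_jump[OF cd N_mono Hr]] split[OF summable_right_jump[OF cd N_mono Hr]]
    by simp
  finally have le_increment: "measure ?\<mu> {y} \<le> (right_lim d N y - right_lim d N t)
      - infsum (left_jump c N) (H \<inter> {t<..y}) - infsum (right_jump d N) (H \<inter> {t<..y})" .
  have "left_jump c N y \<le> infsum (left_jump c N) (H \<inter> {t<..y})"
    using finite_sum_le_infsum[of "left_jump c N" "H \<inter> {t<..y}" "{y}"] yH t
      summable_on_subset_banach[OF summable_left_jump[OF cd N_mono Hr]] left_jump_nonneg[OF cd N_mono] Hr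
    by auto
  moreover have "right_jump d N y \<le> infsum (right_jump d N) (H \<inter> {t<..y})"
    using finite_sum_le_infsum[of "right_jump d N" "H \<inter> {t<..y}" "{y}"] yH t
      summable_on_subset_banach[OF summable_right_jump[OF cd N_mono Hr]] right_jump_nonneg[OF cd N_mono] Hr
    by auto
  moreover have "N t \<le> right_lim d N t" using right_lim_bounds(1)[OF N_mono] t_in by auto
  ultimately show ?thesis using le_increment by linarith
qed

text \<open>The jumps removed from \<open>N\<close> at a point of \<open>H\<close> exhaust its total jump there.\<close>

lemma measure_LS_strip_jumps_singleton:
  assumes yH: "y \<in> H"
  shows "measure (LS_measure c d (strip_jumps c d N H)) {y} = 0"
proof (cases "y = c")
  case True
  have "H \<inter> {c..c} = {c}" using yH True by auto
  then show ?thesis using measure_LS_strip_jumps_Icc[of c] True cd by (simp add: left_lim_def)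
next
  case False
  let ?\<mu> = "LS_measure c d (strip_jumps c d N H)"
  have y: "c < y" "y \<le> d" using False yH Hr by auto
  have lim: "((\<lambda>t. left_lim c N y - N t) \<longlongrightarrow> left_lim c N y - left_lim c N y) (at_left y)"
    by (intro tendsto_diff tendsto_const left_lim_tendsto(1)[OF N_mono y])
  have "measure ?\<mu> {y} \<le> left_lim c N y - left_lim c N y"
  proof (rule tendsto_le[OF _ lim tendsto_const])
    show "eventually (\<lambda>t. measure ?\<mu> {y} \<le> left_lim c N y - N t) (at_left y)"
      using eventually_at_left_real[OF y(1)]
      by (rule eventually_mono) (auto intro: measure_LS_strip_jumps_singleton_le[OF yH])
  qed simp
  then show ?thesis using measure_nonneg[of ?\<mu> "{y}"] by simp
qed

end

section \<open>Change of variables for the composition \<open>N \<circ> M\<close>\<close>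

lemma measurable_mono_on_restrict:
  fixes Z :: "real \<Rightarrow> real"
  assumes "mono_on {c..d} Z" "\<And>y. y \<in> {c..d} \<Longrightarrow> Z y \<in> {a..b}"
  shows "Z \<in> measurable (restrict_space borel {c..d}) (restrict_space borel {a..b})"
  using assms by (intro measurable_restrict_space2 borel_measurable_mono_on_fnc) (auto simp: space_restrict_space)

locale monotone_composition =
  fixes a b :: real and M N :: "real \<Rightarrow> real"
  assumes ab: "a < b" and M_mono: "mono_on {a..b} M" and N_mono: "mono_on {M a..M b} N"
begin

abbreviation "H \<equiv> flat_levels a b M"
abbreviation "X \<equiv> lower_inverse a b M"
abbreviation "\<Xi> \<equiv> upper_inverse a b M"
abbreviation "N1 \<equiv> strip_jumps (M a) (M b) N H"
abbreviation "\<mu>1 \<equiv> LS_measure (M a) (M b) N1"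
abbreviation "\<Omega> \<equiv> restrict_space borel {a..b}"

lemma Ma_le_Mb: "M a \<le> M b"
  using mono_onD[OF M_mono, of a b] ab by auto

lemma flat_levels_subset: "H \<subseteq> {M a..M b}"
  by (auto simp: flat_levels_def)

lemma mono_on_comp: "mono_on {a..b} (N \<circ> M)"
proof (rule mono_onI)
  fix x y assume xy: "x \<in> {a..b}" "y \<in> {a..b}" "x \<le> y"
  then have "M x \<in> {M a..M b}" "M y \<in> {M a..M b}" "M x \<le> M y"
    by (auto intro!: mono_onD[OF M_mono])
  then show "(N \<circ> M) x \<le> (N \<circ> M) y" using mono_onD[OF N_mono] by auto
qed

lemma mono_on_N1: "mono_on {M a..M b} N1"
  by (rule mono_on_strip_jumps[OF Ma_le_Mb N_mono flat_levels_subset])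

lemma finite_measure_\<mu>1: "finite_measure \<mu>1"
  by (rule finite_measure_LS_measure[OF mono_on_N1 Ma_le_Mb])

lemma sets_\<mu>1: "sets \<mu>1 = sets (restrict_space borel {M a..M b})"
  by (rule sets_LS_measure[OF mono_on_N1 Ma_le_Mb])

lemma space_\<mu>1: "space \<mu>1 = {M a..M b}"
  using sets_eq_imp_space_eq[OF sets_\<mu>1] by (simp add: space_restrict_space)

lemma measurable_lower_inverse: "X \<in> measurable \<mu>1 \<Omega>"
  unfolding measurable_cong_sets[OF sets_\<mu>1 refl]
  by (rule measurable_mono_on_restrict[OF mono_on_lower_inverse[OF ab M_mono] lower_inverse_in[OF ab M_mono]])

lemma measurable_upper_inverse: "\<Xi> \<in> measurable \<mu>1 \<Omega>"
  unfolding measurable_cong_sets[OF sets_\<mu>1 refl]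
  by (rule measurable_mono_on_restrict[OF mono_on_upper_inverse[OF ab M_mono] upper_inverse_in[OF ab M_mono]])

lemma right_lim_comp:
  assumes s: "s \<in> {a..b}"
  shows "right_lim b (N \<circ> M) s = (if \<exists>x\<in>{s<..b}. M x = right_lim b M s
    then N (right_lim b M s) else right_lim (M b) N (right_lim b M s))"
proof (cases "\<exists>x\<in>{s<..b}. M x = right_lim b M s")
  case True
  then obtain x1 where x1: "x1 \<in> {s<..b}" "M x1 = right_lim b M s" by blast
  then have sb: "s < b" by simp
  have "eventually (\<lambda>x. (N \<circ> M) x = N (right_lim b M s)) (at_right s)"
    using eventually_at_right_real[of s x1] x1
    by (auto elim!: eventually_mono simp: eq_right_lim_if_flat[OF ab M_mono s x1])
  then have "((N \<circ> M) \<longlongrightarrow> N (right_lim b M s)) (at_right s)" by (rule tendsto_eventually)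
  then show ?thesis using True sb by (simp add: right_lim_def tendsto_Lim)
next
  case False
  let ?m = "right_lim b M s"
  show ?thesis
  proof (cases "s = b")
    case False': False
    then have sb: "a \<le> s" "s < b" using s by auto
    have above: "?m < M x" if x: "x \<in> {s<..b}" for x
    proof -
      have "?m \<le> M x" using right_lim_bounds(2)[OF M_mono, of s x] s x by auto
      moreover have "M x \<noteq> ?m" using False x by auto
      ultimately show ?thesis by simp
    qed
    have "filterlim M (at_right ?m) (at_right s)"
    proof (rule tendsto_imp_filterlim_at_right)
      show "(M \<longlongrightarrow> ?m) (at_right s)" by (rule right_lim_tendsto(1)[OF M_mono sb])
      show "eventually (\<lambda>x. ?m < M x) (at_right s)"
        using eventually_at_right_real[OF sb(2)] by (rule eventually_mono) (auto intro: above)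
    qed
    moreover have "(N \<longlongrightarrow> right_lim (M b) N ?m) (at_right ?m)"
      using right_lim_tendsto(1)[OF N_mono, of ?m] right_lim_in_range[OF ab M_mono s] above[of b] sb
      by auto
    ultimately have "((N \<circ> M) \<longlongrightarrow> right_lim (M b) N ?m) (at_right s)"
      unfolding comp_def by (rule filterlim_compose[rotated])
    then show ?thesis using False sb by (simp add: right_lim_def tendsto_Lim)
  qed (use False in \<open>simp add: right_lim_def\<close>)
qed

text \<open>On a flat stretch starting at \<open>s\<close>, \<open>N \<circ> M\<close> sees the value \<open>N(M(s+))\<close> but not the right jump of \<open>N\<close> there.\<close>

lemma right_lim_comp_eq_jumps:
  assumes s: "s \<in> {a..b}"
  shows "right_lim b (N \<circ> M) s = right_lim (M b) N (right_lim b M s)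
    - infsum (right_jump (M b) N) (H \<inter> {M a..right_lim b M s})
    + infsum (right_jump (M b) N) (H \<inter> (if \<exists>x\<in>{s<..b}. M x = right_lim b M s
        then {M a..<right_lim b M s} else {M a..right_lim b M s}))"
proof (cases "\<exists>x\<in>{s<..b}. M x = right_lim b M s")
  case True
  let ?m = "right_lim b M s"
  obtain x1 where x1: "x1 \<in> {s<..b}" "M x1 = ?m" using True by blast
  have "?m \<in> H" by (rule right_lim_in_flat_levels[OF ab M_mono s x1])
  then have "H \<inter> {?m} = {?m}" by auto
  moreover have "{M a..?m} = {M a..<?m} \<union> {?m}" "{M a..<?m} \<inter> {?m} = {}"
    using right_lim_in_range[OF ab M_mono s] by auto
  ultimately have "infsum (right_jump (M b) N) (H \<inter> {M a..?m})
      = infsum (right_jump (M b) N) (H \<inter> {M a..<?m}) + right_jump (M b) N ?m"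
    using infsum_Int_Un[OF summable_right_jump[OF Ma_le_Mb N_mono flat_levels_subset], of "{M a..<?m}" "{?m}"]
    by simp
  then show ?thesis using right_lim_comp[OF s] True by simp
qed (use right_lim_comp[OF s] in simp)

lemma LS_measure_comp_eq:
  "LS_measure a b (N \<circ> M) = add_measure (add_measure (distr \<mu>1 \<Omega> X)
     (weighted_atoms \<Omega> H (left_jump (M a) N) X)) (weighted_atoms \<Omega> H (right_jump (M b) N) \<Xi>)"
  (is "_ = add_measure (add_measure ?\<rho> ?Am) ?Ap")
proof -
  have X_in: "X y \<in> space \<Omega>" and \<Xi>_in: "\<Xi> y \<in> space \<Omega>" if "y \<in> H" for y
    using lower_inverse_in[OF ab M_mono] upper_inverse_in[OF ab M_mono] flat_levels_subset that
    by (auto simp: space_restrict_space)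
  note left = left_jump_nonneg[OF Ma_le_Mb N_mono subsetD[OF flat_levels_subset]]
    summable_left_jump[OF Ma_le_Mb N_mono flat_levels_subset] X_in
  note right = right_jump_nonneg[OF Ma_le_Mb N_mono subsetD[OF flat_levels_subset]]
    summable_right_jump[OF Ma_le_Mb N_mono flat_levels_subset] \<Xi>_in
  have fin_\<rho>: "finite_measure ?\<rho>"
    by (rule finite_measure.finite_measure_distr[OF finite_measure_\<mu>1 measurable_lower_inverse])
  have fin_Am: "finite_measure ?Am" by (rule finite_measure_weighted_atoms[OF left])
  have fin_Ap: "finite_measure ?Ap" by (rule finite_measure_weighted_atoms[OF right])
  have fin_\<rho>Am: "finite_measure (add_measure ?\<rho> ?Am)"
    by (rule finite_measure_add_measure) (simp_all add: fin_\<rho> fin_Am)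
  show ?thesis
  proof (rule LS_measure_eqI[OF mono_on_comp])
    show "a \<le> b" using ab by simp
    show "sets (add_measure (add_measure ?\<rho> ?Am) ?Ap) = sets \<Omega>" by simp
    show "finite_measure (add_measure (add_measure ?\<rho> ?Am) ?Ap)"
      by (rule finite_measure_add_measure) (simp_all add: fin_\<rho>Am fin_Ap)
    fix s assume s: "s \<in> {a..b}"
    let ?m = "right_lim b M s"
    have Icc: "{a..s} \<in> sets \<Omega>" using s by (subst sets_restrict_space_iff) auto
    have "measure (add_measure (add_measure ?\<rho> ?Am) ?Ap) {a..s} = measure (add_measure ?\<rho> ?Am) {a..s} + measure ?Ap {a..s}"
      by (rule measure_add_measure) (simp_all add: fin_\<rho>Am fin_Ap Icc)
    also have "measure (add_measure ?\<rho> ?Am) {a..s} = measure ?\<rho> {a..s} + measure ?Am {a..s}"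
      by (rule measure_add_measure) (simp_all add: fin_\<rho> fin_Am Icc)
    also have "measure ?\<rho> {a..s} = measure \<mu>1 {M a..?m}"
    proof -
      have "X -` {a..s} \<inter> space \<mu>1 = {M a..?m}"
        using lower_inverse_vimage_Icc[OF ab M_mono s] by (auto simp: space_\<mu>1)
      then show ?thesis by (simp add: measure_distr[OF measurable_lower_inverse Icc])
    qed
    also have "measure \<mu>1 {M a..?m} = right_lim (M b) N ?m - infsum (left_jump (M a) N) (H \<inter> {M a..?m})
        - infsum (right_jump (M b) N) (H \<inter> {M a..?m}) - N (M a)"
      by (rule measure_LS_strip_jumps_Icc[OF Ma_le_Mb N_mono flat_levels_subset right_lim_in_range[OF ab M_mono s]])
    also have "measure ?Am {a..s} = infsum (left_jump (M a) N) (H \<inter> {M a..?m})"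
    proof -
      have "{y \<in> H. X y \<in> {a..s}} = H \<inter> {M a..?m}"
        using lower_inverse_vimage_Icc[OF ab M_mono s] flat_levels_subset by blast
      then show ?thesis using measure_weighted_atoms[OF left Icc] by simp
    qed
    also have "measure ?Ap {a..s} = infsum (right_jump (M b) N)
        (H \<inter> (if \<exists>x\<in>{s<..b}. M x = ?m then {M a..<?m} else {M a..?m}))"
    proof -
      have "{y \<in> H. \<Xi> y \<in> {a..s}} = H \<inter> (if \<exists>x\<in>{s<..b}. M x = ?m then {M a..<?m} else {M a..?m})"
        using upper_inverse_vimage_Icc[OF ab M_mono s] flat_levels_subset by blast
      then show ?thesis using measure_weighted_atoms[OF right Icc] by simp
    qed
    finally show "measure (add_measure (add_measure ?\<rho> ?Am) ?Ap) {a..s} = right_lim b (N \<circ> M) s - (N \<circ> M) a"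
      using right_lim_comp_eq_jumps[OF s] by simp
  qed
qed

lemma LS_integral_comp_eq:
  assumes g_borel: "g \<in> borel_measurable (restrict_space borel (M ` {a..b}))"
    and g_bdd: "bounded (g ` M ` {a..b})"
  shows "LS_integral a b (N \<circ> M) (\<lambda>x. g (M x))
    = LS_integral (M a) (M b) N1 (\<lambda>y. g (M (X y)))
      + (\<Sum>\<^sub>\<infinity>y\<in>H. g (M (X y)) * left_jump (M a) N y) + (\<Sum>\<^sub>\<infinity>y\<in>H. g (M (\<Xi> y)) * right_jump (M b) N y)"
proof -
  let ?\<rho> = "distr \<mu>1 \<Omega> X"
  let ?Am = "weighted_atoms \<Omega> H (left_jump (M a) N) X"
  let ?Ap = "weighted_atoms \<Omega> H (right_jump (M b) N) \<Xi>"
  define G where "G = (\<lambda>x. g (M x))"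
  have G_borel: "G \<in> borel_measurable \<Omega>"
  proof -
    have "M \<in> measurable \<Omega> (restrict_space borel (M ` {a..b}))"
      by (intro measurable_restrict_space2 borel_measurable_mono_on_fnc[OF M_mono]) (auto simp: space_restrict_space)
    from measurable_comp[OF this g_borel] show ?thesis by (simp add: G_def comp_def)
  qed
  have G_bdd': "bounded (G ` {a..b})" using g_bdd by (simp add: G_def image_image)
  then have G_bdd: "bounded (G ` space \<Omega>)" by (simp add: space_restrict_space)
  obtain B where B: "\<And>x. x \<in> {a..b} \<Longrightarrow> \<bar>G x\<bar> \<le> B"
    using G_bdd' unfolding bounded_iff by (metis image_eqI real_norm_def)
  have G_int: "integrable K G" if "sets K = sets \<Omega>" "finite_measure K" for K
  proof (rule finite_measure.integrable_const_bound[OF that(2), where B=B])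
    show "AE x in K. norm (G x) \<le> B"
      using B sets_eq_imp_space_eq[OF that(1)] by (auto simp: space_restrict_space)
    show "G \<in> borel_measurable K" using G_borel by (simp add: measurable_cong_sets[OF that(1) refl])
  qed
  have X_in: "X y \<in> space \<Omega>" and \<Xi>_in: "\<Xi> y \<in> space \<Omega>" if "y \<in> H" for y
    using lower_inverse_in[OF ab M_mono] upper_inverse_in[OF ab M_mono] flat_levels_subset that
    by (auto simp: space_restrict_space)
  note left = left_jump_nonneg[OF Ma_le_Mb N_mono subsetD[OF flat_levels_subset]]
    summable_left_jump[OF Ma_le_Mb N_mono flat_levels_subset] X_in
  note right = right_jump_nonneg[OF Ma_le_Mb N_mono subsetD[OF flat_levels_subset]]
    summable_right_jump[OF Ma_le_Mb N_mono flat_levels_subset] \<Xi>_in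
  have int_\<rho>: "integrable ?\<rho> G"
    by (rule G_int) (simp_all add: finite_measure.finite_measure_distr[OF finite_measure_\<mu>1 measurable_lower_inverse])
  have int_Am: "integrable ?Am G" by (rule G_int) (simp_all add: finite_measure_weighted_atoms[OF left])
  have int_Ap: "integrable ?Ap G" by (rule G_int) (simp_all add: finite_measure_weighted_atoms[OF right])
  have "LS_integral a b (N \<circ> M) (\<lambda>x. g (M x)) = integral\<^sup>L (add_measure (add_measure ?\<rho> ?Am) ?Ap) G"
    unfolding LS_integral_def LS_measure_comp_eq G_def ..
  also have "\<dots> = integral\<^sup>L ?\<rho> G + integral\<^sup>L ?Am G + integral\<^sup>L ?Ap G"
    using int_\<rho> int_Am int_Ap by (simp add: integral_add_measure integrable_add_measure)
  also have "integral\<^sup>L ?\<rho> G = LS_integral (M a) (M b) N1 (\<lambda>y. g (M (X y)))"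
    unfolding LS_integral_def using integral_distr[OF measurable_lower_inverse G_borel] by (simp add: G_def)
  also have "integral\<^sup>L ?Am G = (\<Sum>\<^sub>\<infinity>y\<in>H. g (M (X y)) * left_jump (M a) N y)"
    using integral_weighted_atoms[OF left G_borel G_bdd] by (simp add: G_def)
  also have "integral\<^sup>L ?Ap G = (\<Sum>\<^sub>\<infinity>y\<in>H. g (M (\<Xi> y)) * right_jump (M b) N y)"
    using integral_weighted_atoms[OF right G_borel G_bdd] by (simp add: G_def)
  finally show ?thesis .
qed

lemma LS_integral_strip_jumps_lower_upper:
  assumes g_borel: "g \<in> borel_measurable (restrict_space borel (M ` {a..b}))"
  shows "LS_integral (M a) (M b) N1 (\<lambda>y. g (M (X y))) = LS_integral (M a) (M b) N1 (\<lambda>y. g (M (\<Xi> y)))"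
  unfolding LS_integral_def
proof (rule integral_cong_AE)
  have gM: "(\<lambda>x. g (M x)) \<in> borel_measurable \<Omega>"
  proof -
    have "M \<in> measurable \<Omega> (restrict_space borel (M ` {a..b}))"
      by (intro measurable_restrict_space2 borel_measurable_mono_on_fnc[OF M_mono]) (auto simp: space_restrict_space)
    from measurable_comp[OF this g_borel] show ?thesis by (simp add: comp_def)
  qed
  show "(\<lambda>y. g (M (X y))) \<in> borel_measurable \<mu>1"
    using measurable_comp[OF measurable_lower_inverse gM] by (simp add: comp_def)
  show "(\<lambda>y. g (M (\<Xi> y))) \<in> borel_measurable \<mu>1"
    using measurable_comp[OF measurable_upper_inverse gM] by (simp add: comp_def)
  have "H = (\<Union>y\<in>H. {y})" by auto
  also have "\<dots> \<in> null_sets \<mu>1"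
  proof (rule null_sets_UN')
    show "countable H" by (rule countable_flat_levels[OF ab M_mono])
    fix y assume y: "y \<in> H"
    then have "{y} \<in> sets \<mu>1" using flat_levels_subset by (auto simp: sets_\<mu>1 sets_restrict_space_iff)
    then show "{y} \<in> null_sets \<mu>1"
      using measure_LS_strip_jumps_singleton[OF Ma_le_Mb N_mono flat_levels_subset y]
        finite_measure.emeasure_eq_measure[OF finite_measure_\<mu>1] by auto
  qed
  finally have "H \<in> null_sets \<mu>1" .
  then show "AE y in \<mu>1. g (M (X y)) = g (M (\<Xi> y))"
    by (rule AE_I') (auto simp: space_\<mu>1 intro: in_flat_levels_if_inverses_differ[OF ab M_mono])
qed

end

theorem mainTheorem5:
  fixes a b :: real and M N g :: "real \<Rightarrow> real"
  assumes ab: "a < b"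
    and M_mono: "mono_on {a..b} M"
    and N_mono: "mono_on {M a..M b} N"
    and g_borel: "g \<in> borel_measurable (restrict_space borel (M ` {a..b}))"
    and g_bdd: "bounded (g ` M ` {a..b})"
  defines "H \<equiv> {y \<in> {M a..M b}. \<exists>x1\<in>{a..b}. \<exists>x2\<in>{a..b}. x1 \<noteq> x2 \<and> M x1 = y \<and> M x2 = y}"
    and "X \<equiv> (\<lambda>y. Inf {x \<in> {a..b}. y \<le> M x})"
    and "\<Xi> \<equiv> (\<lambda>y. Sup {x \<in> {a..b}. M x \<le> y})"
    and "dNm \<equiv> (\<lambda>y. N y - left_lim (M a) N y)"
    and "dNp \<equiv> (\<lambda>y. right_lim (M b) N y - N y)"
    and "N1 \<equiv> (\<lambda>t. N t - (\<Sum>\<^sub>\<infinity>y\<in>{y \<in> {M a..M b}. \<exists>x1\<in>{a..b}. \<exists>x2\<in>{a..b}. x1 \<noteq> x2 \<and> M x1 = y \<and> M x2 = y}.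
              (N y - left_lim (M a) N y) * indicator {y..M b} t
              + (right_lim (M b) N y - N y) * indicator {y<..M b} t))"
  shows "LS_integral a b (N \<circ> M) (\<lambda>x. g (M x))
           = LS_integral (M a) (M b) N1 (\<lambda>y. g (M (X y)))
             + (\<Sum>\<^sub>\<infinity>y\<in>H. g (M (X y)) * dNm y)
             + (\<Sum>\<^sub>\<infinity>y\<in>H. g (M (\<Xi> y)) * dNp y)
       \<and> LS_integral a b (N \<circ> M) (\<lambda>x. g (M x))
           = LS_integral (M a) (M b) N1 (\<lambda>y. g (M (\<Xi> y)))
             + (\<Sum>\<^sub>\<infinity>y\<in>H. g (M (X y)) * dNm y)
             + (\<Sum>\<^sub>\<infinity>y\<in>H. g (M (\<Xi> y)) * dNp y)"
proof -
  have loc: "monotone_composition a b M N" using ab M_mono N_mono by unfold_locales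
  have "H = flat_levels a b M" "X = lower_inverse a b M" "\<Xi> = upper_inverse a b M"
    "N1 = strip_jumps (M a) (M b) N (flat_levels a b M)"
    unfolding H_def X_def \<Xi>_def N1_def flat_levels_def lower_inverse_def upper_inverse_def strip_jumps_def
    by (simp_all add: fun_eq_iff)
  then show ?thesis
    unfolding dNm_def dNp_def
    using monotone_composition.LS_integral_comp_eq[OF loc g_borel g_bdd]
      monotone_composition.LS_integral_strip_jumps_lower_upper[OF loc g_borel]
    by simp
qed

end
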